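(* Let $g(k)=1+|k|^2-2\frac{k_1^2}{|k|}$ for $k=(k_1,k_3)\in\mathbb{R}^2$. The mapping $f\mapsto\mathcal{F}^{-1}\big[\frac{1-\chi(k)}{g(k)}\hat f\big]$ defines a bounded linear operator $H^1(\mathbb{R}^2)\to H^3(\mathbb{R}^2)$.
   Context: Fourier transform on $\mathbb{R}^2$: $\hat f(k)=\frac1{2\pi}\int f(x,z)e^{-i(k_1x+k_3z)}dx\,dz$. Fix $\delta\in(0,\frac15)$ and let $\chi$ be the characteristic function of $B=B_\delta(1,0)\cup B_\delta(-1,0)$. (Note $g\ge0$ with equality only at $k=\pm(1,0)$.) *)

theory Defs
  imports "HOL-Analysis.Analysis"
begin

definition L2 :: "(real \<times> real \<Rightarrow> complex) \<Rightarrow> bool" where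
  "L2 f \<longleftrightarrow> f \<in> borel_measurable lborel \<and> integrable lborel (\<lambda>x. (cmod (f x))^2)"

definition ft :: "(real \<times> real \<Rightarrow> complex) \<Rightarrow> real \<times> real \<Rightarrow> complex" where
  "ft \<psi> k = complex_of_real (1 / (2 * pi)) * (LINT x|lborel. \<psi> x * cis (- (fst k * fst x + snd k * snd x)))"

text \<open>phi is the (Plancherel) L^2 Fourier transform of f, characterised by the
  multiplication formula against all test functions in L^1 \<inter> L^2.\<close>
definition is_fourier_L2 :: "(real \<times> real \<Rightarrow> complex) \<Rightarrow> (real \<times> real \<Rightarrow> complex) \<Rightarrow> bool" where
  "is_fourier_L2 f \<phi> \<longleftrightarrow> L2 f \<and> L2 \<phi> \<and>
     (\<forall>\<psi>. integrable lborel \<psi> \<and> L2 \<psi> \<longrightarrow>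
        (LINT k|lborel. \<phi> k * \<psi> k) = (LINT x|lborel. f x * ft \<psi> x))"

definition fourier_L2 :: "(real \<times> real \<Rightarrow> complex) \<Rightarrow> real \<times> real \<Rightarrow> complex" where
  "fourier_L2 f = (SOME \<phi>. is_fourier_L2 f \<phi>)"

definition sobolev_space :: "real \<Rightarrow> (real \<times> real \<Rightarrow> complex) set" where
  "sobolev_space s = {f. L2 f \<and> (\<exists>\<phi>. is_fourier_L2 f \<phi> \<and>
      L2 (\<lambda>k. complex_of_real ((1 + (norm k)^2) powr (s / 2)) * \<phi> k))}"

definition sobolev_norm :: "real \<Rightarrow> (real \<times> real \<Rightarrow> complex) \<Rightarrow> real" where
  "sobolev_norm s f = sqrt (LINT k|lborel. (1 + (norm k)^2) powr s * (cmod (fourier_L2 f k))^2)"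

definition gsym :: "real \<times> real \<Rightarrow> real" where
  "gsym k = 1 + (norm k)^2 - 2 * (fst k)^2 / norm k"

definition chi :: "real \<Rightarrow> real \<times> real \<Rightarrow> real" where
  "chi \<delta> k = indicator (ball (1, 0) \<delta> \<union> ball (-1, 0) \<delta>) k"

definition multiplier :: "real \<Rightarrow> real \<times> real \<Rightarrow> real" where
  "multiplier \<delta> k = (1 - chi \<delta> k) / gsym k"

end

theory Submission
  imports Defs "HOL-Probability.Characteristic_Functions" "HOL-Probability.Sinc_Integral"
begin

text \<open>Outside the two balls the symbol satisfies \<open>g(k) \<ge> \<delta>\<^sup>2/5 (1 + |k|\<^sup>2)\<close>, so the multiplier
  \<open>m = (1 - \<chi>)/g\<close> obeys \<open>|m(k)| (1 + |k|\<^sup>2) \<le> 5/\<delta>\<^sup>2\<close>: multiplication by \<open>m\<close> gains two powers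
  of the Sobolev weight, and \<open>\<Phi> = m \<phi>\<close> lies in \<open>L\<^sup>1 \<inter> L\<^sup>2\<close> for \<open>\<phi> \<in> L\<^sup>2\<close> because \<open>1/(1 + |k|\<^sup>2)\<close>
  is square integrable on \<open>\<real>\<^sup>2\<close>.

  The solution \<open>u\<close> is the integral transform of \<open>\<Phi>(-k)\<close>. That \<open>\<Phi>\<close> is its \<open>L\<^sup>2\<close> Fourier transform
  in the weak sense of \<open>is_fourier_L2\<close> is Parseval's identity for \<open>L\<^sup>1 \<inter> L\<^sup>2\<close> functions, proved by
  Gaussian damping: the damped pairing of two transforms is a Gaussian average of the correlation
  \<open>w \<mapsto> \<integral> a(y + w) conj(b(y)) dy\<close>, which is continuous at \<open>0\<close> by the \<open>L\<^sup>1\<close> continuity of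
  translation. Testing against truncations to balls shows that \<open>L\<^sup>2\<close> Fourier transforms are unique
  almost everywhere, which identifies \<open>fourier_L2 u\<close> with \<open>\<Phi>\<close>.\<close>

lemma borel_measurable_cis [measurable (raw)]:
  "f \<in> borel_measurable M \<Longrightarrow> (\<lambda>x. cis (f x)) \<in> borel_measurable M"
  by (rule borel_measurable_continuous_on[where f = cis]) (auto simp: cis_conv_exp intro!: continuous_intros)

lemma borel_measurable_cnj [measurable (raw)]:
  "f \<in> borel_measurable M \<Longrightarrow> (\<lambda>x. cnj (f x)) \<in> borel_measurable M"
  by (rule borel_measurable_continuous_on[where f = cnj]) (auto intro!: continuous_intros)

lemma nn_integral_lborel_affine:
  fixes f :: "'a::euclidean_space \<Rightarrow> ennreal"
  assumes [measurable]: "f \<in> borel_measurable borel" and c: "c \<noteq> 0"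
  shows "(\<integral>\<^sup>+x. f x \<partial>lborel) = ennreal (\<bar>c\<bar> ^ DIM('a)) * (\<integral>\<^sup>+x. f (t + c *\<^sub>R x) \<partial>lborel)"
  by (subst lborel_affine[OF c, of t])
     (simp add: nn_integral_density nn_integral_distr nn_integral_cmult)

lemma integrable_lborel_affine:
  fixes f :: "'a::euclidean_space \<Rightarrow> 'b::{banach, second_countable_topology}"
  assumes f: "integrable lborel f" and c: "c \<noteq> 0"
  shows "integrable lborel (\<lambda>x. f (t + c *\<^sub>R x))"
  using f f[THEN borel_measurable_integrable] unfolding integrable_iff_bounded
  by (subst (asm) nn_integral_lborel_affine[where c = c and t = t]) (auto simp: ennreal_mult_less_top c)

lemma integrable_lborel_affine_iff:
  fixes f :: "'a::euclidean_space \<Rightarrow> 'b::{banach, second_countable_topology}"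
  assumes c: "c \<noteq> 0"
  shows "integrable lborel (\<lambda>x. f (t + c *\<^sub>R x)) \<longleftrightarrow> integrable lborel f"
proof
  assume "integrable lborel (\<lambda>x. f (t + c *\<^sub>R x))"
  from integrable_lborel_affine[OF this, of "1 / c" "- t /\<^sub>R c"] c
  show "integrable lborel f" by (simp add: algebra_simps)
qed (rule integrable_lborel_affine[OF _ c])

lemma integral_lborel_affine:
  fixes f :: "'a::euclidean_space \<Rightarrow> 'b::{banach, second_countable_topology}"
  assumes c: "c \<noteq> 0"
  shows "(\<integral>x. f x \<partial>lborel) = (\<bar>c\<bar> ^ DIM('a)) *\<^sub>R (\<integral>x. f (t + c *\<^sub>R x) \<partial>lborel)"
proof cases
  assume f[measurable]: "integrable lborel f"
  then show ?thesis
    using c integrable_lborel_affine[OF f c, of t]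
    by (subst lborel_affine[OF c, of t]) (simp add: integral_density integral_distr)
next
  assume "\<not> integrable lborel f"
  with c show ?thesis by (simp add: integrable_lborel_affine_iff not_integrable_integral_eq)
qed

lemma nn_integral_lborel_translate:
  fixes f :: "'a::euclidean_space \<Rightarrow> ennreal"
  assumes "f \<in> borel_measurable borel"
  shows "(\<integral>\<^sup>+x. f (x + w) \<partial>lborel) = (\<integral>\<^sup>+x. f x \<partial>lborel)"
  using nn_integral_lborel_affine[OF assms, of 1 w] by (simp add: add.commute)

lemma integrable_lborel_translate_iff:
  fixes f :: "'a::euclidean_space \<Rightarrow> 'b::{banach, second_countable_topology}"
  shows "integrable lborel (\<lambda>x. f (x + w)) \<longleftrightarrow> integrable lborel f"
  using integrable_lborel_affine_iff[of 1 f w] by (simp add: add.commute)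

lemma integral_lborel_translate:
  fixes f :: "'a::euclidean_space \<Rightarrow> 'b::{banach, second_countable_topology}"
  shows "(\<integral>x. f (x + w) \<partial>lborel) = (\<integral>x. f x \<partial>lborel)"
  using integral_lborel_affine[of 1 f w] by (simp add: add.commute)

lemma integrable_lborel_reflect_iff:
  fixes f :: "'a::euclidean_space \<Rightarrow> 'b::{banach, second_countable_topology}"
  shows "integrable lborel (\<lambda>x. f (- x)) \<longleftrightarrow> integrable lborel f"
  using integrable_lborel_affine_iff[of "-1" f 0] by simp

lemma integral_lborel_reflect:
  fixes f :: "'a::euclidean_space \<Rightarrow> 'b::{banach, second_countable_topology}"
  shows "(\<integral>x. f (- x) \<partial>lborel) = (\<integral>x. f x \<partial>lborel)"
  using integral_lborel_affine[of "-1" f 0] by simp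

lemma integral_lborel_scale:
  fixes f :: "'a::euclidean_space \<Rightarrow> 'b::{banach, second_countable_topology}"
  assumes "c > 0"
  shows "(\<integral>x. f x \<partial>lborel) = (c ^ DIM('a)) *\<^sub>R (\<integral>x. f (c *\<^sub>R x) \<partial>lborel)"
  using integral_lborel_affine[of c f 0] assms by simp

lemma
  fixes f :: "'a::euclidean_space \<Rightarrow> 'c::{real_normed_field, banach, second_countable_topology}"
    and g :: "'b::euclidean_space \<Rightarrow> 'c"
  assumes f: "integrable lborel f" and g: "integrable lborel g"
  shows integrable_lborel_mult_pair: "integrable lborel (\<lambda>p. f (fst p) * g (snd p))"
    and integral_lborel_mult_pair: "(\<integral>p. f (fst p) * g (snd p) \<partial>lborel) = integral\<^sup>L lborel f * integral\<^sup>L lborel g"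
proof -
  have [measurable]: "f \<in> borel_measurable borel" "g \<in> borel_measurable borel"
    using f g by auto
  have int: "integrable (lborel \<Otimes>\<^sub>M lborel) (\<lambda>(x, y). f x * g y)"
    by (rule lborel_pair.Fubini_integrable) (use f g in \<open>auto simp: norm_mult\<close>)
  then show "integrable lborel (\<lambda>p. f (fst p) * g (snd p))"
    by (simp add: lborel_prod case_prod_beta')
  have "(\<integral>p. (case p of (x, y) \<Rightarrow> f x * g y) \<partial>(lborel \<Otimes>\<^sub>M lborel)) = integral\<^sup>L lborel f * integral\<^sup>L lborel g"
    using lborel_pair.integral_fst'[OF int] by simp
  then show "(\<integral>p. f (fst p) * g (snd p) \<partial>lborel) = integral\<^sup>L lborel f * integral\<^sup>L lborel g"
    by (simp add: lborel_prod case_prod_beta')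
qed

lemma norm_pair_sq: "(norm k)\<^sup>2 = (fst k)\<^sup>2 + (snd k)\<^sup>2" for k :: "real \<times> real"
  by (cases k) (simp add: norm_Pair)

lemma inner_pair_real: "k \<bullet> x = fst k * fst x + snd k * snd x" for k x :: "real \<times> real"
  by (simp add: inner_prod_def)

section \<open>Gaussian integrals\<close>

lemma has_bochner_integral_gaussian_cis_real:
  fixes \<epsilon> a :: real
  assumes "\<epsilon> > 0"
  shows "has_bochner_integral lborel (\<lambda>t. of_real (exp (- \<epsilon> * t\<^sup>2)) * cis (a * t))
           (of_real (sqrt (pi / \<epsilon>) * exp (- a\<^sup>2 / (4 * \<epsilon>))))"
proof -
  define c where "c = sqrt (2 * \<epsilon>)"
  have c: "c > 0" "c\<^sup>2 = 2 * \<epsilon>" using assms by (auto simp: c_def)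
  define f where "f x = std_normal_density x *\<^sub>R iexp (a / c * x)" for x
  have "integral\<^sup>L lborel f = char std_normal_distribution (a / c)"
    unfolding char_def f_def by (subst integral_density) (auto simp: mult.commute)
  also have "\<dots> = of_real (exp (- (a / c)\<^sup>2 / 2))"
    by (simp add: char_std_normal_distribution)
  finally have If: "integral\<^sup>L lborel f = of_real (exp (- (a / c)\<^sup>2 / 2))" .
  then have "integrable lborel f"
    using not_integrable_integral_eq by fastforce
  moreover have f_scaled: "f (0 + c * t) = of_real (1 / sqrt (2 * pi)) * (of_real (exp (- \<epsilon> * t\<^sup>2)) * cis (a * t))" for t
    using c unfolding f_def
    by (simp add: std_normal_density_def normal_density_def cis_conv_exp power_mult_distrib
        scaleR_conv_of_real algebra_simps)
  ultimately have "integrable lborel (\<lambda>t. of_real (1 / sqrt (2 * pi)) * (of_real (exp (- \<epsilon> * t\<^sup>2)) * cis (a * t)))"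
    using lborel_integrable_real_affine[of f c 0] c by (simp add: f_scaled)
  from integrable_mult_right[OF this, of "of_real (sqrt (2 * pi))"]
  have int: "integrable lborel (\<lambda>t. of_real (exp (- \<epsilon> * t\<^sup>2)) * cis (a * t))"
    by (simp flip: of_real_mult)
  have "integral\<^sup>L lborel f = c *\<^sub>R (\<integral>t. f (0 + c * t) \<partial>lborel)"
    using lborel_integral_real_affine[of c f 0] c by simp
  then have "(\<integral>t. of_real (exp (- \<epsilon> * t\<^sup>2)) * cis (a * t) \<partial>lborel) =
      of_real (sqrt (2 * pi) / c * exp (- (a / c)\<^sup>2 / 2))"
    using c If unfolding f_scaled by (simp add: scaleR_conv_of_real field_simps)
  also have "sqrt (2 * pi) / c = sqrt (pi / \<epsilon>)"
    using assms unfolding c_def by (simp add: real_sqrt_divide[symmetric] del: real_sqrt_divide)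
  also have "- (a / c)\<^sup>2 / 2 = - a\<^sup>2 / (4 * \<epsilon>)"
    using c assms by (simp add: power_divide)
  finally show ?thesis using int by (simp add: has_bochner_integral_iff)
qed

lemma has_bochner_integral_gaussian_cis:
  fixes \<epsilon> :: real and w :: "real \<times> real"
  assumes "\<epsilon> > 0"
  shows "has_bochner_integral lborel (\<lambda>k. of_real (exp (- \<epsilon> * (norm k)\<^sup>2)) * cis (k \<bullet> w))
           (of_real (pi / \<epsilon> * exp (- (norm w)\<^sup>2 / (4 * \<epsilon>))))"
proof -
  define F where "F a t = of_real (exp (- \<epsilon> * t\<^sup>2)) * cis (a * t)" for a t :: real
  have split: "(\<lambda>k. of_real (exp (- \<epsilon> * (norm k)\<^sup>2)) * cis (k \<bullet> w)) =
      (\<lambda>k. F (fst w) (fst k) * F (snd w) (snd k))"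
    by (simp add: F_def norm_pair_sq inner_pair_real algebra_simps exp_diff exp_minus
        cis_mult[symmetric] field_simps)
  have int: "integrable lborel (F a)"
    and val: "integral\<^sup>L lborel (F a) = of_real (sqrt (pi / \<epsilon>) * exp (- a\<^sup>2 / (4 * \<epsilon>)))" for a
    using has_bochner_integral_gaussian_cis_real[OF assms, of a]
    unfolding F_def[abs_def] has_bochner_integral_iff by auto
  have "sqrt (pi / \<epsilon>) * exp (- (fst w)\<^sup>2 / (4 * \<epsilon>)) * (sqrt (pi / \<epsilon>) * exp (- (snd w)\<^sup>2 / (4 * \<epsilon>)))
      = pi / \<epsilon> * exp (- (norm w)\<^sup>2 / (4 * \<epsilon>))"
    using assms by (simp add: norm_pair_sq exp_add[symmetric] field_simps)
  then show ?thesis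
    unfolding split has_bochner_integral_iff integral_lborel_mult_pair[OF int int] val
      of_real_mult[symmetric]
    using integrable_lborel_mult_pair[OF int int] by simp
qed

lemma
  fixes \<epsilon> :: real
  assumes "\<epsilon> > 0"
  shows integrable_gaussian: "integrable lborel (\<lambda>k::real \<times> real. exp (- \<epsilon> * (norm k)\<^sup>2))"
    and integral_gaussian: "(\<integral>k. exp (- \<epsilon> * (norm k)\<^sup>2) \<partial>(lborel :: (real \<times> real) measure)) = pi / \<epsilon>"
  using has_bochner_integral_gaussian_cis[OF assms, of 0]
  by (simp_all add: has_bochner_integral_iff complex_of_real_integrable_eq flip: of_real_divide)

lemma tendsto_integral_gaussian_dilate:
  fixes h :: "real \<times> real \<Rightarrow> complex" and c :: "nat \<Rightarrow> real"
  assumes [measurable]: "h \<in> borel_measurable borel" and bound: "\<And>w. norm (h w) \<le> M"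
    and cont: "isCont h 0" and c: "c \<longlonglongrightarrow> 0"
  shows "(\<lambda>n. \<integral>v. of_real (exp (- (norm v)\<^sup>2) / pi) * h (c n *\<^sub>R v) \<partial>lborel) \<longlonglongrightarrow> h 0"
proof -
  have gauss: "integrable lborel (\<lambda>v::real \<times> real. exp (- (norm v)\<^sup>2) / pi)"
    "(\<integral>v. exp (- (norm v)\<^sup>2) / pi \<partial>(lborel :: (real \<times> real) measure)) = 1"
    using integrable_gaussian[of 1] integral_gaussian[of 1] by simp_all
  have "(\<lambda>n. \<integral>v. of_real (exp (- (norm v)\<^sup>2) / pi) * h (c n *\<^sub>R v) \<partial>lborel) \<longlonglongrightarrow>
      (\<integral>v. of_real (exp (- (norm v)\<^sup>2) / pi) * h 0 \<partial>(lborel :: (real \<times> real) measure))"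
  proof (rule Bochner_Integration.integral_dominated_convergence[where w = "\<lambda>v. exp (- (norm v)\<^sup>2) / pi * M"])
    show "integrable lborel (\<lambda>v::real \<times> real. exp (- (norm v)\<^sup>2) / pi * M)"
      by (rule integrable_mult_left) (rule gauss(1))
    show "AE v in lborel. (\<lambda>n. of_real (exp (- (norm v)\<^sup>2) / pi) * h (c n *\<^sub>R v)) \<longlonglongrightarrow>
        of_real (exp (- (norm v)\<^sup>2) / pi) * h 0"
    proof (intro AE_I2 tendsto_mult tendsto_const)
      fix v :: "real \<times> real"
      have "(\<lambda>n. c n *\<^sub>R v) \<longlonglongrightarrow> 0"
        using tendsto_scaleR[OF c tendsto_const[of v]] by simp
      then show "(\<lambda>n. h (c n *\<^sub>R v)) \<longlonglongrightarrow> h 0"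
        by (rule isCont_tendsto_compose[OF cont])
    qed
    show "AE v in lborel. norm (of_real (exp (- (norm v)\<^sup>2) / pi) * h (c n *\<^sub>R v)) \<le>
        exp (- (norm v)\<^sup>2) / pi * M" for n
    proof (intro AE_I2)
      fix v :: "real \<times> real"
      have "norm (of_real (exp (- (norm v)\<^sup>2) / pi) * h (c n *\<^sub>R v)) =
          exp (- (norm v)\<^sup>2) / pi * norm (h (c n *\<^sub>R v))"
        unfolding norm_mult norm_of_real by simp
      also have "\<dots> \<le> exp (- (norm v)\<^sup>2) / pi * M"
        using bound by (intro mult_left_mono) auto
      finally show "norm (of_real (exp (- (norm v)\<^sup>2) / pi) * h (c n *\<^sub>R v)) \<le>
          exp (- (norm v)\<^sup>2) / pi * M" .
    qed
  qed measurable
  also have "(\<integral>v. of_real (exp (- (norm v)\<^sup>2) / pi) * h 0 \<partial>(lborel :: (real \<times> real) measure)) = h 0"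
    using gauss(2) by simp
  finally show ?thesis .
qed

section \<open>Continuity of translation in \<open>L\<^sup>1\<close>\<close>

lemma lborel_inner_regular_compact:
  fixes A :: "'a::euclidean_space set" and e :: real
  assumes A[measurable]: "A \<in> sets borel" and fin: "emeasure lborel A < \<infinity>" and e: "e > 0"
  obtains K where "compact K" "K \<subseteq> A" "emeasure lborel (A - K) < e"
proof -
  obtain U where U: "open U" "- A \<subseteq> U" "emeasure lborel (U - - A) < e / 2"
    using outer_regular_lborel[of "- A" "e / 2"] e by (metis borel_comp A half_gt_zero)
  define C where "C n = A - cball 0 (real n)" for n :: nat
  have "(\<lambda>n. emeasure lborel (C n)) \<longlonglongrightarrow> emeasure lborel (\<Inter>n. C n)"
  proof (rule Lim_emeasure_decseq)
    show "emeasure lborel (C n) \<noteq> \<infinity>" for n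
      using fin emeasure_mono[of "C n" A lborel] by (auto simp: C_def top_unique)
  qed (auto simp: C_def decseq_def)
  moreover have "(\<Inter>n. C n) = {}"
    using real_arch_simple by (fastforce simp: C_def)
  ultimately have "\<forall>\<^sub>F n in sequentially. emeasure lborel (C n) < e / 2"
    using e by (intro order_tendstoD(2)) auto
  then obtain n where n: "emeasure lborel (C n) < e / 2"
    by (auto simp: eventually_sequentially)
  show ?thesis
  proof
    show "compact (- U \<inter> cball 0 (real n))"
      using U(1) by (intro closed_Int_compact) auto
    show "- U \<inter> cball 0 (real n) \<subseteq> A"
      using U(2) by auto
    have "emeasure lborel (A - (- U \<inter> cball 0 (real n))) \<le> emeasure lborel ((U - - A) \<union> C n)"
      using U(1) by (intro emeasure_mono) (auto simp: C_def)
    also have "\<dots> \<le> emeasure lborel (U - - A) + emeasure lborel (C n)"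
      using U(1) by (intro emeasure_subadditive) (auto simp: C_def)
    also have "\<dots> < ennreal (e / 2) + ennreal (e / 2)"
      using U(3) n by (rule add_strict_mono)
    finally show "emeasure lborel (A - (- U \<inter> cball 0 (real n))) < e"
      using e by (simp flip: ennreal_plus)
  qed
qed

lemma tendsto_L1_translate_indicator:
  fixes A :: "'a::euclidean_space set"
  assumes A[measurable]: "A \<in> sets borel" and fin: "emeasure lborel A < \<infinity>"
  shows "((\<lambda>w. \<integral>x. \<bar>indicator A (x + w) - indicator A x :: real\<bar> \<partial>lborel) \<longlongrightarrow> 0) (at 0)"
proof (rule order_tendstoI)
  show "\<forall>\<^sub>F w in at 0. a < (\<integral>x. \<bar>indicator A (x + w) - indicator A x :: real\<bar> \<partial>lborel)" if "a < 0" for a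
    using that by (intro always_eventually allI) (simp add: less_le_trans)
  fix e :: real
  assume e: "e > 0"
  obtain U where U: "open U" "A \<subseteq> U" "emeasure lborel (U - A) < e / 4"
    using outer_regular_lborel[OF A, of "e / 4"] e by auto
  obtain K where K: "compact K" "K \<subseteq> A" "emeasure lborel (A - K) < e / 4"
    using lborel_inner_regular_compact[OF A fin, of "e / 4"] e by auto
  have [measurable]: "U \<in> sets borel" "K \<in> sets borel"
    using U(1) K(1) by (auto intro: borel_compact)
  obtain d where d: "d > 0" "(\<Union>x\<in>K. ball x d) \<subseteq> U"
    using compact_subset_open_imp_ball_epsilon_subset[OF K(1) U(1)] K(2) U(2) by blast
  have fin_diff: "emeasure lborel (A - K) < \<infinity>" "emeasure lborel (U - A) < \<infinity>"
    using K(3) U(3) by (auto simp: less_trans[OF _ ennreal_less_top])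
  define i1 :: "'a \<Rightarrow> real" where "i1 = indicator (A - K)"
  define i2 :: "'a \<Rightarrow> real" where "i2 = indicator (U - A)"
  have int: "integrable lborel i1" "integrable lborel i2"
    unfolding i1_def i2_def using fin_diff by (auto intro: integrable_real_indicator)
  then have int_w: "integrable lborel (\<lambda>x. i1 (x + w))" "integrable lborel (\<lambda>x. i2 (x + w))" for w
    by (simp_all add: integrable_lborel_translate_iff)
  have "\<bar>indicator A (x + w) - indicator A x :: real\<bar> \<le> i1 (x + w) + i2 x + i1 x + i2 (x + w)"
    if "norm w < d" for x w
  proof -
    have "x + w \<in> U" if "x \<in> K"
      using d(2) that \<open>norm w < d\<close> by (force simp: dist_norm)
    moreover have "x \<in> U" if "x + w \<in> K"
      using d(2) that \<open>norm w < d\<close> by (force simp: dist_norm)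
    ultimately show ?thesis
      using U(2) K(2) unfolding i1_def i2_def indicator_def by auto
  qed
  then have "(\<integral>x. \<bar>indicator A (x + w) - indicator A x :: real\<bar> \<partial>lborel) \<le>
      (\<integral>x. i1 (x + w) + i2 x + i1 x + i2 (x + w) \<partial>lborel)" if "norm w < d" for w
    using that int int_w A fin
    by (intro integral_mono integrable_abs integrable_diff)
       (auto simp: integrable_lborel_translate_iff[where f = "indicator A"])
  also have "(\<integral>x. i1 (x + w) + i2 x + i1 x + i2 (x + w) \<partial>lborel) =
      2 * measure lborel (A - K) + 2 * measure lborel (U - A)" for w
    using int int_w by (simp add: integral_lborel_translate i1_def i2_def)
  also have "2 * measure lborel (A - K) + 2 * measure lborel (U - A) < e"
  proof -
    have "measure lborel (A - K) < e / 4" "measure lborel (U - A) < e / 4"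
      using K(3) U(3) fin_diff by (metis enn2real_less_iff infinity_ennreal_def measure_def)+
    then show ?thesis by linarith
  qed
  finally show "\<forall>\<^sub>F w in at 0. (\<integral>x. \<bar>indicator A (x + w) - indicator A x :: real\<bar> \<partial>lborel) < e"
    using d(1) by (auto simp: eventually_at dist_norm)
qed

lemma integrable_norm_translate_diff:
  fixes f :: "'a::euclidean_space \<Rightarrow> 'b::{banach, second_countable_topology}"
  assumes "integrable lborel f"
  shows "integrable lborel (\<lambda>x. norm (f (x + w) - f x))"
  using assms by (intro integrable_norm integrable_diff) (auto simp: integrable_lborel_translate_iff[where f = f])

lemma integral_norm_translate_diff_le:
  fixes f s :: "'a::euclidean_space \<Rightarrow> 'b::{banach, second_countable_topology}"
  assumes f: "integrable lborel f" and s: "integrable lborel s"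
  shows "(\<integral>x. norm (f (x + w) - f x) \<partial>lborel) \<le>
    2 * (\<integral>x. norm (s x - f x) \<partial>lborel) + (\<integral>x. norm (s (x + w) - s x) \<partial>lborel)"
proof -
  have int: "integrable lborel (\<lambda>x. norm (s x - f x))"
    using f s by auto
  then have int_w: "integrable lborel (\<lambda>x. norm (s (x + w) - f (x + w)))"
    using integrable_lborel_translate_iff[where f = "\<lambda>x. norm (s x - f x)"] by simp
  have "(\<integral>x. norm (f (x + w) - f x) \<partial>lborel) \<le>
      (\<integral>x. norm (s (x + w) - f (x + w)) + norm (s (x + w) - s x) + norm (s x - f x) \<partial>lborel)"
  proof (intro integral_mono)
    fix x
    have "f (x + w) - f x = (s (x + w) - s x) + (s x - f x) - (s (x + w) - f (x + w))"
      by (simp add: algebra_simps)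
    then have "norm (f (x + w) - f x) \<le> norm ((s (x + w) - s x) + (s x - f x)) + norm (s (x + w) - f (x + w))"
      by (metis norm_triangle_ineq4)
    then show "norm (f (x + w) - f x) \<le> norm (s (x + w) - f (x + w)) + norm (s (x + w) - s x) + norm (s x - f x)"
      using norm_triangle_ineq[of "s (x + w) - s x" "s x - f x"] by linarith
  qed (use int int_w integrable_norm_translate_diff[OF f] integrable_norm_translate_diff[OF s]
      in \<open>auto intro!: Bochner_Integration.integrable_add\<close>)
  also have "\<dots> = 2 * (\<integral>x. norm (s x - f x) \<partial>lborel) + (\<integral>x. norm (s (x + w) - s x) \<partial>lborel)"
    using int int_w integrable_norm_translate_diff[OF s]
    by (simp add: integral_lborel_translate[where f = "\<lambda>x. norm (s x - f x)"])
  finally show ?thesis .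
qed

lemma tendsto_L1_translate:
  fixes f :: "'a::euclidean_space \<Rightarrow> 'b::{banach, second_countable_topology}"
  assumes "integrable lborel f"
  shows "((\<lambda>w. \<integral>x. norm (f (x + w) - f x) \<partial>lborel) \<longlongrightarrow> 0) (at 0)"
  using assms
proof (induct rule: integrable_induct)
  case (base A c)
  have "(\<integral>x. norm (indicator A (x + w) *\<^sub>R c - indicator A x *\<^sub>R c) \<partial>lborel) =
      (\<integral>x. \<bar>indicator A (x + w) - indicator A x :: real\<bar> \<partial>lborel) * norm c" for w
    by (simp flip: scaleR_diff_left)
  with tendsto_L1_translate_indicator[OF _ base(2)] base(1) show ?case
    by (auto intro: tendsto_mult_left_zero)
next
  case (add f g)
  show ?case
  proof (rule tendsto_sandwich[where f = "\<lambda>_. 0"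
        and h = "\<lambda>w. (\<integral>x. norm (f (x + w) - f x) \<partial>lborel) + (\<integral>x. norm (g (x + w) - g x) \<partial>lborel)"])
    show "((\<lambda>w. (\<integral>x. norm (f (x + w) - f x) \<partial>lborel) + (\<integral>x. norm (g (x + w) - g x) \<partial>lborel))
        \<longlongrightarrow> 0) (at 0)"
      using tendsto_add[OF add(2) add(4)] by simp
    have "(\<integral>x. norm (f (x + w) + g (x + w) - (f x + g x)) \<partial>lborel) \<le>
        (\<integral>x. norm (f (x + w) - f x) + norm (g (x + w) - g x) \<partial>lborel)" for w
      using integrable_norm_translate_diff[OF Bochner_Integration.integrable_add[OF add(1) add(3)]]
        integrable_norm_translate_diff[OF add(1)] integrable_norm_translate_diff[OF add(3)]
      by (intro integral_mono) (auto simp: norm_diff_triangle_ineq)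
    then show "\<forall>\<^sub>F w in at 0. (\<integral>x. norm (f (x + w) + g (x + w) - (f x + g x)) \<partial>lborel) \<le>
        (\<integral>x. norm (f (x + w) - f x) \<partial>lborel) + (\<integral>x. norm (g (x + w) - g x) \<partial>lborel)"
      using integrable_norm_translate_diff[OF add(1)] integrable_norm_translate_diff[OF add(3)]
      by (intro always_eventually allI) simp
  qed auto
next
  case (lim f s)
  have [measurable]: "f \<in> borel_measurable borel" "s i \<in> borel_measurable borel" for i
    using lim(1,5) by auto
  have "(\<lambda>i. \<integral>x. norm (s i x - f x) \<partial>lborel) \<longlonglongrightarrow> (\<integral>x. 0 \<partial>(lborel :: 'a measure))"
  proof (rule Bochner_Integration.integral_dominated_convergence[where w = "\<lambda>x. 3 * norm (f x)"
        and s = "\<lambda>i x. norm (s i x - f x)" and f = "\<lambda>_. 0 :: real" and M = lborel])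
    show "AE x in lborel. norm (norm (s i x - f x)) \<le> 3 * norm (f x)" for i
      using lim(4) by (intro AE_I2) (smt (verit) UNIV_I norm_ge_zero norm_triangle_ineq4 real_norm_def space_borel)
  qed (use lim(3,5) in \<open>auto intro!: tendsto_norm_zero LIM_zero\<close>)
  then have L1_lim: "(\<lambda>i. \<integral>x. norm (s i x - f x) \<partial>lborel) \<longlonglongrightarrow> 0"
    by simp
  show ?case
  proof (rule order_tendstoI)
    show "\<forall>\<^sub>F w in at 0. a < (\<integral>x. norm (f (x + w) - f x) \<partial>lborel)" if "a < 0" for a
      using that by (intro always_eventually allI) (simp add: less_le_trans)
    fix e :: real
    assume e: "e > 0"
    then obtain i where i: "(\<integral>x. norm (s i x - f x) \<partial>lborel) < e / 3"
      using order_tendstoD(2)[OF L1_lim, of "e / 3"] by (auto simp: eventually_sequentially)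
    have "\<forall>\<^sub>F w in at 0. (\<integral>x. norm (s i (x + w) - s i x) \<partial>lborel) < e / 3"
      using order_tendstoD(2)[OF lim(2)[of i], of "e / 3"] e by simp
    then show "\<forall>\<^sub>F w in at 0. (\<integral>x. norm (f (x + w) - f x) \<partial>lborel) < e"
    proof eventually_elim
      case (elim w)
      with integral_norm_translate_diff_le[OF lim(5) lim(1), of w i] i show ?case
        by linarith
    qed
  qed
qed

lemma ft_inner: "ft \<psi> k = of_real (1 / (2 * pi)) * (\<integral>x. \<psi> x * cis (- (k \<bullet> x)) \<partial>lborel)"
  unfolding ft_def inner_pair_real ..

lemma borel_measurable_ft [measurable]:
  assumes [measurable]: "\<psi> \<in> borel_measurable borel"
  shows "ft \<psi> \<in> borel_measurable borel"
proof -
  have "(\<lambda>(k, x). \<psi> x * cis (- (k \<bullet> x))) \<in> borel_measurable (lborel \<Otimes>\<^sub>M lborel)"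
    by measurable
  then have "(\<lambda>k. \<integral>x. \<psi> x * cis (- (k \<bullet> x)) \<partial>lborel) \<in> borel_measurable lborel"
    by (rule lborel.borel_measurable_lebesgue_integral)
  then show ?thesis
    unfolding ft_inner[abs_def] by measurable
qed

lemma norm_ft_le:
  assumes "integrable lborel a"
  shows "norm (ft a k) \<le> (\<integral>x. norm (a x) \<partial>lborel) / (2 * pi)"
proof -
  have "norm (ft a k) = norm (\<integral>x. a x * cis (- (k \<bullet> x)) \<partial>lborel) / (2 * pi)"
    unfolding ft_inner norm_mult norm_of_real by simp
  also have "\<dots> \<le> (\<integral>x. norm (a x * cis (- (k \<bullet> x))) \<partial>lborel) / (2 * pi)"
    by (intro divide_right_mono integral_norm_bound) simp
  finally show ?thesis
    by (simp add: norm_mult)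
qed

lemma ft_cnj_reflect: "cnj (ft (\<lambda>k. cnj (\<psi> (- k))) x) = ft \<psi> x"
proof -
  have "cnj (\<integral>k. cnj (\<psi> (- k)) * cis (- (x \<bullet> k)) \<partial>lborel) =
      (\<integral>k. cnj (cnj (\<psi> (- k)) * cis (- (x \<bullet> k))) \<partial>lborel)"
    by (rule Bochner_Integration.integral_cnj[symmetric])
  also have "\<dots> = (\<integral>k. \<psi> (- k) * cis (- (x \<bullet> - k)) \<partial>lborel)"
    by (simp only: complex_cnj_mult complex_cnj_cnj cis_cnj inner_minus_right)
  also have "\<dots> = (\<integral>k. \<psi> k * cis (- (x \<bullet> k)) \<partial>lborel)"
    by (rule integral_lborel_reflect[where f = "\<lambda>k. \<psi> k * cis (- (x \<bullet> k))"])
  finally show ?thesis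
    unfolding ft_inner complex_cnj_mult complex_cnj_complex_of_real by (simp only:)
qed

lemma ft_gaussian:
  assumes "\<epsilon> > 0"
  shows "ft (\<lambda>k. of_real (exp (- \<epsilon> * (norm k)\<^sup>2))) x = of_real (exp (- (norm x)\<^sup>2 / (4 * \<epsilon>)) / (2 * \<epsilon>))"
proof -
  have integral: "(\<integral>k. of_real (exp (- \<epsilon> * (norm k)\<^sup>2)) * cis (- (x \<bullet> k)) \<partial>lborel) =
      of_real (pi / \<epsilon> * exp (- (norm x)\<^sup>2 / (4 * \<epsilon>)))"
    using has_bochner_integral_gaussian_cis[OF assms, of "- x"]
    by (simp add: has_bochner_integral_iff inner_commute)
  have const: "1 / (2 * pi) * (pi / \<epsilon> * exp (- (norm x)\<^sup>2 / (4 * \<epsilon>))) =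
      exp (- (norm x)\<^sup>2 / (4 * \<epsilon>)) / (2 * \<epsilon>)"
    using assms by (simp add: field_simps)
  show ?thesis
    unfolding ft_inner integral of_real_mult[symmetric] const ..
qed

lemma integral_ft_mult:
  fixes f g :: "real \<times> real \<Rightarrow> complex"
  assumes f: "integrable lborel f" and g: "integrable lborel g"
  shows "(\<integral>k. ft f k * g k \<partial>lborel) = (\<integral>x. f x * ft g x \<partial>lborel)"
proof -
  have [measurable]: "f \<in> borel_measurable borel" "g \<in> borel_measurable borel"
    using f g by auto
  define F where "F x k = f x * g k * cis (- (k \<bullet> x))" for x k :: "real \<times> real"
  have "integrable (lborel \<Otimes>\<^sub>M lborel) (\<lambda>(x, k). F x k)"
  proof (rule Bochner_Integration.integrable_bound)
    show "integrable (lborel \<Otimes>\<^sub>M lborel) (\<lambda>p. norm (f (fst p)) * norm (g (snd p)))"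
      unfolding lborel_prod using f g by (intro integrable_lborel_mult_pair) auto
    show "(\<lambda>(x, k). F x k) \<in> borel_measurable (lborel \<Otimes>\<^sub>M lborel)"
      unfolding F_def by measurable
    show "AE p in lborel \<Otimes>\<^sub>M lborel. norm (case p of (x, k) \<Rightarrow> F x k) \<le> norm (norm (f (fst p)) * norm (g (snd p)))"
      by (intro AE_I2) (simp add: F_def norm_mult split: prod.split)
  qed
  then have Fubini: "(\<integral>k. (\<integral>x. F x k \<partial>lborel) \<partial>lborel) = (\<integral>x. (\<integral>k. F x k \<partial>lborel) \<partial>lborel)"
    by (rule lborel_pair.Fubini_integral)
  have lhs: "ft f k * g k = of_real (1 / (2 * pi)) * (\<integral>x. F x k \<partial>lborel)" for k
  proof -
    have "(\<integral>x. F x k \<partial>lborel) = (\<integral>x. g k * (f x * cis (- (k \<bullet> x))) \<partial>lborel)"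
      unfolding F_def by (simp add: mult_ac)
    then show ?thesis
      by (simp add: ft_inner)
  qed
  have rhs: "f x * ft g x = of_real (1 / (2 * pi)) * (\<integral>k. F x k \<partial>lborel)" for x
  proof -
    have "(\<integral>k. F x k \<partial>lborel) = (\<integral>k. f x * (g k * cis (- (x \<bullet> k))) \<partial>lborel)"
      unfolding F_def by (simp add: mult_ac inner_commute)
    then show ?thesis
      by (simp add: ft_inner)
  qed
  show ?thesis
    unfolding lhs rhs integral_mult_right_zero Fubini ..
qed

definition correlation :: "('a::euclidean_space \<Rightarrow> complex) \<Rightarrow> ('a \<Rightarrow> complex) \<Rightarrow> 'a \<Rightarrow> complex" where
  "correlation a b w = (\<integral>y. a (y + w) * cnj (b y) \<partial>lborel)"

lemma integrable_translate_mult_pair: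
  fixes a b :: "'a::euclidean_space \<Rightarrow> 'c::{real_normed_field, banach, second_countable_topology}"
  assumes a: "integrable lborel a" and b: "integrable lborel b"
  shows "integrable (lborel \<Otimes>\<^sub>M lborel) (\<lambda>(y, w). a (y + w) * b y)"
proof (rule integrableI_bounded)
  have [measurable]: "a \<in> borel_measurable borel" "b \<in> borel_measurable borel"
    using a b by auto
  show "(\<lambda>(y, w). a (y + w) * b y) \<in> borel_measurable (lborel \<Otimes>\<^sub>M lborel)"
    by measurable
  have "(\<integral>\<^sup>+p. norm (case p of (y, w) \<Rightarrow> a (y + w) * b y) \<partial>(lborel \<Otimes>\<^sub>M lborel)) =
      (\<integral>\<^sup>+y. (\<integral>\<^sup>+w. norm (b y) * norm (a (y + w)) \<partial>lborel) \<partial>lborel)"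
    by (subst lborel.nn_integral_fst[symmetric]) (auto simp: norm_mult mult.commute)
  also have "\<dots> = (\<integral>\<^sup>+y. norm (b y) * (\<integral>\<^sup>+x. norm (a x) \<partial>lborel) \<partial>lborel)"
  proof -
    have "(\<integral>\<^sup>+w. norm (a (y + w)) \<partial>lborel) = (\<integral>\<^sup>+x. norm (a x) \<partial>lborel)" for y
      using nn_integral_lborel_translate[of "\<lambda>x. ennreal (norm (a x))" y] by (simp add: add.commute)
    then show ?thesis
      by (simp add: ennreal_mult nn_integral_cmult)
  qed
  also have "\<dots> = (\<integral>\<^sup>+y. norm (b y) \<partial>lborel) * (\<integral>\<^sup>+x. norm (a x) \<partial>lborel)"
    by (rule nn_integral_multc) simp
  also have "\<dots> < \<infinity>"
    using a b by (simp add: integrable_iff_bounded ennreal_mult_less_top)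
  finally show "(\<integral>\<^sup>+p. norm (case p of (y, w) \<Rightarrow> a (y + w) * b y) \<partial>(lborel \<Otimes>\<^sub>M lborel)) < \<infinity>" .
qed

lemma integrable_correlation:
  assumes "integrable lborel a" "integrable lborel b"
  shows "integrable lborel (correlation a b)"
  using lborel_pair.integrable_snd[of "\<lambda>y w. a (y + w) * cnj (b y)"]
    integrable_translate_mult_pair[OF assms(1) integrable_cnj[OF assms(2)]]
  unfolding correlation_def[abs_def] by simp

lemma ft_correlation:
  fixes a b :: "real \<times> real \<Rightarrow> complex"
  assumes a: "integrable lborel a" and b: "integrable lborel b"
  shows "ft (correlation a b) k = of_real (2 * pi) * ft a k * cnj (ft b k)"
proof -
  have [measurable]: "a \<in> borel_measurable borel" "b \<in> borel_measurable borel"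
    using a b by auto
  define G where "G y w = a (y + w) * cnj (b y) * cis (- (k \<bullet> w))" for y w :: "real \<times> real"
  have "integrable (lborel \<Otimes>\<^sub>M lborel) (\<lambda>(y, w). G y w)"
  proof (rule Bochner_Integration.integrable_bound)
    show "integrable (lborel \<Otimes>\<^sub>M lborel) (\<lambda>(y, w). norm (a (y + w) * cnj (b y)))"
      using integrable_norm[OF integrable_translate_mult_pair[OF a integrable_cnj[OF b]]]
      by (simp add: case_prod_beta')
    show "(\<lambda>(y, w). G y w) \<in> borel_measurable (lborel \<Otimes>\<^sub>M lborel)"
      unfolding G_def by measurable
    show "AE p in lborel \<Otimes>\<^sub>M lborel. norm (case p of (y, w) \<Rightarrow> G y w) \<le>
        norm (case p of (y, w) \<Rightarrow> norm (a (y + w) * cnj (b y)))"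
      by (intro AE_I2) (simp add: G_def norm_mult split: prod.split)
  qed
  then have Fubini: "(\<integral>w. (\<integral>y. G y w \<partial>lborel) \<partial>lborel) = (\<integral>y. (\<integral>w. G y w \<partial>lborel) \<partial>lborel)"
    by (rule lborel_pair.Fubini_integral)
  have inner: "(\<integral>w. G y w \<partial>lborel) = cnj (b y) * cis (k \<bullet> y) * (\<integral>x. a x * cis (- (k \<bullet> x)) \<partial>lborel)" for y
  proof -
    have "G y w = cnj (b y) * cis (k \<bullet> y) * (a (w + y) * cis (- (k \<bullet> (w + y))))" for w
      by (simp add: G_def inner_add_right cis_mult add.commute mult_ac)
    then show ?thesis
      by (simp add: integral_lborel_translate[where f = "\<lambda>x. a x * cis (- (k \<bullet> x))"])
  qed
  have "(\<integral>y. cnj (b y) * cis (k \<bullet> y) \<partial>lborel) = cnj (\<integral>y. b y * cis (- (k \<bullet> y)) \<partial>lborel)"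
    by (simp flip: Bochner_Integration.integral_cnj add: cis_cnj)
  then have "(\<integral>y. (\<integral>w. G y w \<partial>lborel) \<partial>lborel) =
      (\<integral>x. a x * cis (- (k \<bullet> x)) \<partial>lborel) * cnj (\<integral>y. b y * cis (- (k \<bullet> y)) \<partial>lborel)"
    unfolding inner by (simp add: mult.commute)
  moreover have "(\<integral>w. correlation a b w * cis (- (k \<bullet> w)) \<partial>lborel) = (\<integral>w. (\<integral>y. G y w \<partial>lborel) \<partial>lborel)"
    by (simp add: correlation_def G_def)
  ultimately show ?thesis
    by (simp add: ft_inner Fubini field_simps)
qed

lemma integral_ft_mult_cnj_gaussian:
  fixes a b :: "real \<times> real \<Rightarrow> complex"
  assumes a: "integrable lborel a" and b: "integrable lborel b" and \<epsilon>: "\<epsilon> > 0"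
  shows "(\<integral>k. ft a k * cnj (ft b k) * of_real (exp (- \<epsilon> * (norm k)\<^sup>2)) \<partial>lborel) =
    (\<integral>v. of_real (exp (- (norm v)\<^sup>2) / pi) * correlation a b ((2 * sqrt \<epsilon>) *\<^sub>R v) \<partial>lborel)"
proof -
  define c where "c = 2 * sqrt \<epsilon>"
  have c: "c > 0" "c\<^sup>2 = 4 * \<epsilon>"
    using \<epsilon> by (auto simp: c_def power_mult_distrib)
  define h where "h w = of_real (exp (- (norm w)\<^sup>2 / (4 * \<epsilon>))) * correlation a b w" for w
  have gauss: "integrable lborel (\<lambda>k::real \<times> real. of_real (exp (- \<epsilon> * (norm k)\<^sup>2)) :: complex)"
    using integrable_gaussian[OF \<epsilon>] by (rule integrable_of_real)
  have "(\<integral>k. ft a k * cnj (ft b k) * of_real (exp (- \<epsilon> * (norm k)\<^sup>2)) \<partial>lborel) =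
      of_real (1 / (2 * pi)) * (\<integral>k. ft (correlation a b) k * of_real (exp (- \<epsilon> * (norm k)\<^sup>2)) \<partial>lborel)"
    by (simp add: ft_correlation[OF a b] mult.assoc)
  also have "(\<integral>k. ft (correlation a b) k * of_real (exp (- \<epsilon> * (norm k)\<^sup>2)) \<partial>lborel) =
      (\<integral>w. correlation a b w * of_real (exp (- (norm w)\<^sup>2 / (4 * \<epsilon>)) / (2 * \<epsilon>)) \<partial>lborel)"
    using integral_ft_mult[OF integrable_correlation[OF a b] gauss] unfolding ft_gaussian[OF \<epsilon>] .
  also have "\<dots> = of_real (1 / (2 * \<epsilon>)) * integral\<^sup>L lborel h"
    by (simp add: h_def[abs_def] mult_ac)
  also have "integral\<^sup>L lborel h = c\<^sup>2 *\<^sub>R (\<integral>v. h (c *\<^sub>R v) \<partial>lborel)"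
    using integral_lborel_scale[OF c(1), of h] by (simp add: power2_eq_square)
  also have "of_real (1 / (2 * pi)) * (of_real (1 / (2 * \<epsilon>)) * (c\<^sup>2 *\<^sub>R (\<integral>v. h (c *\<^sub>R v) \<partial>lborel))) =
      of_real (1 / (2 * pi) * (1 / (2 * \<epsilon>) * c\<^sup>2)) * (\<integral>v. h (c *\<^sub>R v) \<partial>lborel)"
    unfolding scaleR_conv_of_real of_real_mult by (simp only: mult.assoc)
  also have "1 / (2 * pi) * (1 / (2 * \<epsilon>) * c\<^sup>2) = 1 / pi"
    using c(2) \<epsilon> by (simp add: field_simps)
  also have "of_real (1 / pi) * (\<integral>v. h (c *\<^sub>R v) \<partial>lborel) =
      (\<integral>v. of_real (1 / pi) * (of_real (exp (- (norm v)\<^sup>2)) * correlation a b (c *\<^sub>R v)) \<partial>lborel)"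
    using c \<epsilon> by (simp add: h_def power_mult_distrib)
  also have "\<dots> = (\<integral>v. of_real (exp (- (norm v)\<^sup>2) / pi) * correlation a b (c *\<^sub>R v) \<partial>lborel)"
    by (simp add: field_simps)
  finally show ?thesis
    unfolding c_def .
qed

lemma L2_integrable_mult:
  assumes a: "L2 a" and b: "L2 b"
  shows "integrable lborel (\<lambda>x. a x * b x)"
proof (rule Bochner_Integration.integrable_bound[where f = "\<lambda>x. ((norm (a x))\<^sup>2 + (norm (b x))\<^sup>2) / 2"])
  show "integrable lborel (\<lambda>x. ((norm (a x))\<^sup>2 + (norm (b x))\<^sup>2) / 2)"
    using a b unfolding L2_def by auto
  have [measurable]: "a \<in> borel_measurable borel" "b \<in> borel_measurable borel"
    using a b by (simp_all add: L2_def)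
  show "(\<lambda>x. a x * b x) \<in> borel_measurable lborel"
    by measurable
  show "AE x in lborel. norm (a x * b x) \<le> norm (((norm (a x))\<^sup>2 + (norm (b x))\<^sup>2) / 2)"
  proof (intro AE_I2)
    fix x
    show "norm (a x * b x) \<le> norm (((norm (a x))\<^sup>2 + (norm (b x))\<^sup>2) / 2)"
      using sum_squares_bound[of "norm (a x)" "norm (b x)"] by (simp add: norm_mult)
  qed
qed

lemma L2_cnj: "L2 b \<Longrightarrow> L2 (\<lambda>y. cnj (b y))"
  unfolding L2_def by (simp add: borel_measurable_cnj)

lemma L2_translate:
  assumes "L2 a"
  shows "L2 (\<lambda>y. a (y + w))"
proof -
  have [measurable]: "a \<in> borel_measurable borel"
    using assms by (simp add: L2_def)
  have "(\<lambda>y. a (y + w)) \<in> borel_measurable borel"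
    by measurable
  with assms show ?thesis
    unfolding L2_def by (simp add: integrable_lborel_translate_iff[where f = "\<lambda>y. (norm (a y))\<^sup>2"])
qed

lemma L2_reflect:
  assumes "L2 a"
  shows "L2 (\<lambda>y. a (- y))"
proof -
  have [measurable]: "a \<in> borel_measurable borel"
    using assms by (simp add: L2_def)
  have "(\<lambda>y. a (- y)) \<in> borel_measurable borel"
    by measurable
  with assms show ?thesis
    unfolding L2_def by (simp add: integrable_lborel_reflect_iff[where f = "\<lambda>y. (norm (a y))\<^sup>2"])
qed

lemma L2_mult_bounded:
  assumes f: "L2 f" and [measurable]: "g \<in> borel_measurable borel" and g: "\<And>x. norm (g x) \<le> C"
  shows "L2 (\<lambda>x. g x * f x)"
proof -
  have [measurable]: "f \<in> borel_measurable borel"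
    using f by (simp add: L2_def)
  have "integrable lborel (\<lambda>x. (norm (g x * f x))\<^sup>2)"
  proof (rule Bochner_Integration.integrable_bound[where f = "\<lambda>x. C\<^sup>2 * (norm (f x))\<^sup>2"])
    show "integrable lborel (\<lambda>x. C\<^sup>2 * (norm (f x))\<^sup>2)"
      using f by (simp add: L2_def)
    show "AE x in lborel. norm ((norm (g x * f x))\<^sup>2) \<le> norm (C\<^sup>2 * (norm (f x))\<^sup>2)"
    proof (intro AE_I2)
      fix x
      have "(norm (g x))\<^sup>2 \<le> C\<^sup>2"
        using g[of x] by (intro power_mono) auto
      then show "norm ((norm (g x * f x))\<^sup>2) \<le> norm (C\<^sup>2 * (norm (f x))\<^sup>2)"
        by (simp add: norm_mult power_mult_distrib mult_right_mono)
    qed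
  qed measurable
  then show ?thesis
    by (simp add: L2_def)
qed

lemma L2_diff:
  assumes f: "L2 f" and g: "L2 g"
  shows "L2 (\<lambda>x. f x - g x)"
proof -
  have [measurable]: "f \<in> borel_measurable borel" "g \<in> borel_measurable borel"
    using f g by (simp_all add: L2_def)
  have bound: "(norm (f x - g x))\<^sup>2 \<le> 2 * (norm (f x))\<^sup>2 + 2 * (norm (g x))\<^sup>2" for x
  proof -
    have "norm (f x - g x) \<le> norm (f x) + norm (g x)"
      by (rule norm_triangle_ineq4)
    then have "(norm (f x - g x))\<^sup>2 \<le> (norm (f x) + norm (g x))\<^sup>2"
      by (rule power_mono) simp
    also have "\<dots> \<le> 2 * (norm (f x))\<^sup>2 + 2 * (norm (g x))\<^sup>2"
      using sum_squares_bound[of "norm (f x)" "norm (g x)"] by (simp add: power2_sum)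
    finally show ?thesis .
  qed
  have "integrable lborel (\<lambda>x. (norm (f x - g x))\<^sup>2)"
  proof (rule Bochner_Integration.integrable_bound[where f = "\<lambda>x. 2 * (norm (f x))\<^sup>2 + 2 * (norm (g x))\<^sup>2"])
    show "integrable lborel (\<lambda>x. 2 * (norm (f x))\<^sup>2 + 2 * (norm (g x))\<^sup>2)"
      using f g by (simp add: L2_def)
    show "AE x in lborel. norm ((norm (f x - g x))\<^sup>2) \<le> norm (2 * (norm (f x))\<^sup>2 + 2 * (norm (g x))\<^sup>2)"
      using bound by (intro AE_I2) simp
  qed measurable
  then show ?thesis
    by (simp add: L2_def)
qed

lemma L2_indicator_ball: "L2 (indicator (ball (0 :: real \<times> real) r) :: real \<times> real \<Rightarrow> complex)"
proof -
  have [measurable]: "ball (0 :: real \<times> real) r \<in> sets borel"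
    by simp
  have "(\<lambda>k. (norm (indicator (ball 0 r) k :: complex))\<^sup>2) = indicator (ball (0 :: real \<times> real) r)"
    by (auto simp: indicator_def)
  then show ?thesis
    using emeasure_bounded_finite[of "ball (0 :: real \<times> real) r"]
    by (simp add: L2_def integrable_real_indicator less_top borel_measurable_indicator)
qed

lemma integrable_inverse_1_plus_sq: "integrable lborel (\<lambda>x::real. inverse (1 + x\<^sup>2))"
proof -
  have "indicator (einterval (-\<infinity>) \<infinity>) x = (1 :: real)" for x :: real
    by (simp add: einterval_def indicator_def)
  then show ?thesis
    using integrable_inverse_1_plus_square[unfolded set_integrable_def] by simp
qed

lemma integrable_inverse_1_plus_norm_sq_sq:
  "integrable lborel (\<lambda>k::real \<times> real. 1 / (1 + (norm k)\<^sup>2)\<^sup>2)"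
proof (rule Bochner_Integration.integrable_bound)
  show "integrable lborel (\<lambda>k::real \<times> real. inverse (1 + (fst k)\<^sup>2) * inverse (1 + (snd k)\<^sup>2))"
    by (rule integrable_lborel_mult_pair[OF integrable_inverse_1_plus_sq integrable_inverse_1_plus_sq])
  have "(1 + a) * (1 + b) \<le> (1 + (a + b))\<^sup>2" if "a \<ge> 0" "b \<ge> 0" for a b :: real
    using that mult_nonneg_nonneg[OF that] mult_nonneg_nonneg[OF that(1) that(1)] mult_nonneg_nonneg[OF that(2) that(2)]
    by (simp add: power2_eq_square algebra_simps)
  then have le: "(1 + (fst k)\<^sup>2) * (1 + (snd k)\<^sup>2) \<le> (1 + (norm k)\<^sup>2)\<^sup>2" for k :: "real \<times> real"
    by (simp add: norm_pair_sq)
  have pointwise: "norm (1 / (1 + (norm k)\<^sup>2)\<^sup>2 :: real) \<le> norm (inverse (1 + (fst k)\<^sup>2) * inverse (1 + (snd k)\<^sup>2))"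
    for k :: "real \<times> real"
  proof -
    have "0 < (1 + (norm k)\<^sup>2)\<^sup>2 * ((1 + (fst k)\<^sup>2) * (1 + (snd k)\<^sup>2))"
      by (intro mult_pos_pos zero_less_power add_pos_nonneg) auto
    then have "1 / (1 + (norm k)\<^sup>2)\<^sup>2 \<le> 1 / ((1 + (fst k)\<^sup>2) * (1 + (snd k)\<^sup>2))"
      by (intro divide_left_mono[OF le]) auto
    then show ?thesis
      by (simp add: divide_inverse inverse_mult_distrib)
  qed
  show "AE k in lborel. norm (1 / (1 + (norm (k :: real \<times> real))\<^sup>2)\<^sup>2 :: real) \<le>
      norm (inverse (1 + (fst k)\<^sup>2) * inverse (1 + (snd k)\<^sup>2))"
    by (intro AE_I2 pointwise)
qed measurable

lemma L2_of_real_decay: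
  fixes m :: "real \<times> real \<Rightarrow> real"
  assumes [measurable]: "m \<in> borel_measurable borel" and m: "\<And>k. \<bar>m k\<bar> * (1 + (norm k)\<^sup>2) \<le> C"
  shows "L2 (\<lambda>k. of_real (m k))"
proof -
  have m_sq: "(m k)\<^sup>2 \<le> C\<^sup>2 * (1 / (1 + (norm k)\<^sup>2)\<^sup>2)" for k
  proof -
    have "(\<bar>m k\<bar> * (1 + (norm k)\<^sup>2))\<^sup>2 \<le> C\<^sup>2"
      using m[of k] by (intro power_mono) auto
    moreover have "1 + (norm k)\<^sup>2 > 0"
      by (simp add: add_pos_nonneg)
    ultimately show ?thesis
      by (simp add: le_divide_eq power_mult_distrib)
  qed
  have "integrable lborel (\<lambda>k. (m k)\<^sup>2)"
  proof (rule Bochner_Integration.integrable_bound[where f = "\<lambda>k::real \<times> real. C\<^sup>2 * (1 / (1 + (norm k)\<^sup>2)\<^sup>2)"])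
    show "integrable lborel (\<lambda>k::real \<times> real. C\<^sup>2 * (1 / (1 + (norm k)\<^sup>2)\<^sup>2))"
      by (rule integrable_mult_right) (rule integrable_inverse_1_plus_norm_sq_sq)
  qed (use m_sq in \<open>auto intro: AE_I2\<close>)
  then show ?thesis
    by (simp add: L2_def)
qed

lemma borel_measurable_correlation [measurable]:
  assumes [measurable]: "a \<in> borel_measurable borel" "b \<in> borel_measurable borel"
  shows "correlation a b \<in> borel_measurable borel"
proof -
  have "(\<lambda>(w, y). a (y + w) * cnj (b y)) \<in> borel_measurable (lborel \<Otimes>\<^sub>M lborel)"
    by measurable
  then have "(\<lambda>w. \<integral>y. a (y + w) * cnj (b y) \<partial>lborel) \<in> borel_measurable lborel"
    by (rule lborel.borel_measurable_lebesgue_integral)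
  then show ?thesis
    unfolding correlation_def[abs_def] by simp
qed

lemma norm_correlation_le:
  assumes a: "L2 a" and b: "L2 b"
  shows "norm (correlation a b w) \<le> ((\<integral>x. (norm (a x))\<^sup>2 \<partial>lborel) + (\<integral>x. (norm (b x))\<^sup>2 \<partial>lborel)) / 2"
proof -
  have int: "integrable lborel (\<lambda>y. (norm (a (y + w)))\<^sup>2)" "integrable lborel (\<lambda>y. (norm (b y))\<^sup>2)"
    using L2_translate[OF a] b by (simp_all add: L2_def)
  have "norm (correlation a b w) \<le> (\<integral>y. norm (a (y + w) * cnj (b y)) \<partial>lborel)"
    unfolding correlation_def by (rule integral_norm_bound)
  also have "\<dots> \<le> (\<integral>y. ((norm (a (y + w)))\<^sup>2 + (norm (b y))\<^sup>2) / 2 \<partial>lborel)"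
  proof (rule integral_mono)
    show "norm (a (y + w) * cnj (b y)) \<le> ((norm (a (y + w)))\<^sup>2 + (norm (b y))\<^sup>2) / 2" for y
      using sum_squares_bound[of "norm (a (y + w))" "norm (b y)"] by (simp add: norm_mult)
  qed (use L2_integrable_mult[OF L2_translate[OF a] L2_cnj[OF b]] int in auto)
  also have "\<dots> = ((\<integral>y. (norm (a (y + w)))\<^sup>2 \<partial>lborel) + (\<integral>y. (norm (b y))\<^sup>2 \<partial>lborel)) / 2"
    using int by simp
  finally show ?thesis
    by (simp add: integral_lborel_translate[where f = "\<lambda>y. (norm (a y))\<^sup>2"])
qed

lemma tendsto_L2_tail:
  assumes "L2 b"
  shows "(\<lambda>n::nat. \<integral>y. (if norm (b y) \<le> n then 0 else (norm (b y))\<^sup>2) \<partial>lborel) \<longlonglongrightarrow> 0"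
proof -
  have [measurable]: "b \<in> borel_measurable borel"
    using assms by (simp add: L2_def)
  have "(\<lambda>n::nat. \<integral>y. (if norm (b y) \<le> n then 0 else (norm (b y))\<^sup>2) \<partial>lborel) \<longlonglongrightarrow>
      (\<integral>y. 0 \<partial>(lborel :: (real \<times> real) measure))"
  proof (rule Bochner_Integration.integral_dominated_convergence[where w = "\<lambda>y. (norm (b y))\<^sup>2"])
    show "AE y in lborel. (\<lambda>n::nat. if norm (b y) \<le> n then 0 else (norm (b y))\<^sup>2) \<longlonglongrightarrow> 0"
    proof (intro AE_I2 tendsto_eventually)
      fix y
      obtain N :: nat where "norm (b y) \<le> N"
        using real_arch_simple by blast
      then show "\<forall>\<^sub>F n in sequentially. (if norm (b y) \<le> real n then 0 else (norm (b y))\<^sup>2) = 0"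
        unfolding eventually_sequentially by (intro exI[of _ N]) auto
    qed
  qed (use assms in \<open>auto simp: L2_def\<close>)
  then show ?thesis
    by simp
qed

lemma mult_le_truncation_split:
  fixes D B N t :: real
  assumes "D \<ge> 0" "B \<ge> 0" "N \<ge> 0" "t > 0"
  shows "D * B \<le> N * D + t / 2 * D\<^sup>2 + (if B \<le> N then 0 else B\<^sup>2) / (2 * t)"
proof (cases "B \<le> N")
  case True
  then have "D * B \<le> N * D"
    using assms by (metis mult.commute mult_right_mono)
  moreover have "0 \<le> t / 2 * D\<^sup>2"
    using assms by simp
  ultimately show ?thesis
    using True by simp
next
  case False
  have "0 \<le> (t * D - B)\<^sup>2"
    by simp
  then have "D * B \<le> t / 2 * D\<^sup>2 + B\<^sup>2 / (2 * t)"
    using assms by (simp add: field_simps power2_eq_square)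
  moreover have "0 \<le> N * D"
    using assms False by simp
  ultimately show ?thesis
    using False by simp
qed

lemma integral_norm_translate_diff_sq_le:
  assumes "L2 a"
  shows "(\<integral>y. (norm (a (y + w) - a y))\<^sup>2 \<partial>lborel) \<le> 4 * (\<integral>y. (norm (a y))\<^sup>2 \<partial>lborel)"
proof -
  have int: "integrable lborel (\<lambda>y. (norm (a y))\<^sup>2)" "integrable lborel (\<lambda>y. (norm (a (y + w)))\<^sup>2)"
    "integrable lborel (\<lambda>y. (norm (a (y + w) - a y))\<^sup>2)"
    using assms L2_translate[OF assms] L2_diff[OF L2_translate[OF assms] assms] by (simp_all add: L2_def)
  have "(norm (a (y + w) - a y))\<^sup>2 \<le> 2 * (norm (a (y + w)))\<^sup>2 + 2 * (norm (a y))\<^sup>2" for y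
  proof -
    have "(norm (a (y + w) - a y))\<^sup>2 \<le> (norm (a (y + w)) + norm (a y))\<^sup>2"
      by (rule power_mono[OF norm_triangle_ineq4]) simp
    also have "\<dots> \<le> 2 * (norm (a (y + w)))\<^sup>2 + 2 * (norm (a y))\<^sup>2"
      using sum_squares_bound[of "norm (a (y + w))" "norm (a y)"] by (simp add: power2_sum)
    finally show ?thesis .
  qed
  then have "(\<integral>y. (norm (a (y + w) - a y))\<^sup>2 \<partial>lborel) \<le>
      (\<integral>y. 2 * (norm (a (y + w)))\<^sup>2 + 2 * (norm (a y))\<^sup>2 \<partial>lborel)"
    using int by (intro integral_mono) auto
  also have "\<dots> = 4 * (\<integral>y. (norm (a y))\<^sup>2 \<partial>lborel)"
    using int by (simp add: integral_lborel_translate[where f = "\<lambda>y. (norm (a y))\<^sup>2"])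
  finally show ?thesis .
qed

text \<open>Split \<open>b\<close> at height \<open>n\<close>: the bounded part is controlled by the \<open>L\<^sup>1\<close> modulus of
  continuity of \<open>a\<close>, the tail by the weighted AM-GM inequality.\<close>

lemma norm_correlation_diff_le:
  assumes ai: "integrable lborel a" and a: "L2 a" and b: "L2 b" and t: "t > 0"
  shows "norm (correlation a b w - correlation a b 0) \<le>
    real n * (\<integral>y. norm (a (y + w) - a y) \<partial>lborel) + 2 * t * (\<integral>y. (norm (a y))\<^sup>2 \<partial>lborel) +
    (\<integral>y. (if norm (b y) \<le> n then 0 else (norm (b y))\<^sup>2) \<partial>lborel) / (2 * t)"
proof -
  have [measurable]: "a \<in> borel_measurable borel" "b \<in> borel_measurable borel"
    using a b by (simp_all add: L2_def)
  define D where "D y = norm (a (y + w) - a y)" for y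
  define R where "R y = (if norm (b y) \<le> n then 0 else (norm (b y))\<^sup>2)" for y
  have int_D: "integrable lborel D"
    unfolding D_def by (rule integrable_norm_translate_diff[OF ai])
  have int_D2: "integrable lborel (\<lambda>y. (D y)\<^sup>2)"
    using L2_diff[OF L2_translate[OF a] a] by (simp add: L2_def D_def)
  have int_R: "integrable lborel R"
  proof (rule Bochner_Integration.integrable_bound[where f = "\<lambda>y. (norm (b y))\<^sup>2"])
    show "integrable lborel (\<lambda>y. (norm (b y))\<^sup>2)"
      using b by (simp add: L2_def)
    show "R \<in> borel_measurable lborel"
      unfolding R_def by measurable
  qed (simp add: R_def)
  have "correlation a b w - correlation a b 0 = (\<integral>y. (a (y + w) - a y) * cnj (b y) \<partial>lborel)"
    using L2_integrable_mult[OF L2_translate[OF a, of w] L2_cnj[OF b]] L2_integrable_mult[OF a L2_cnj[OF b]]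
    by (simp add: correlation_def left_diff_distrib)
  then have "norm (correlation a b w - correlation a b 0) \<le> (\<integral>y. D y * norm (b y) \<partial>lborel)"
    using integral_norm_bound[of lborel "\<lambda>y. (a (y + w) - a y) * cnj (b y)"] by (simp add: D_def norm_mult)
  also have "\<dots> \<le> (\<integral>y. real n * D y + t / 2 * (D y)\<^sup>2 + R y / (2 * t) \<partial>lborel)"
  proof (rule integral_mono)
    show "integrable lborel (\<lambda>y. D y * norm (b y))"
      using integrable_norm[OF L2_integrable_mult[OF L2_diff[OF L2_translate[OF a] a] L2_cnj[OF b]]]
      by (simp add: D_def norm_mult)
    show "D y * norm (b y) \<le> real n * D y + t / 2 * (D y)\<^sup>2 + R y / (2 * t)" for y
      unfolding R_def D_def by (rule mult_le_truncation_split[OF _ _ _ t]) auto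
  qed (use int_D int_D2 int_R in auto)
  also have "\<dots> = real n * integral\<^sup>L lborel D + t / 2 * (\<integral>y. (D y)\<^sup>2 \<partial>lborel) + integral\<^sup>L lborel R / (2 * t)"
    using int_D int_D2 int_R by simp
  also have "\<dots> \<le> real n * integral\<^sup>L lborel D + 2 * t * (\<integral>y. (norm (a y))\<^sup>2 \<partial>lborel) + integral\<^sup>L lborel R / (2 * t)"
    using integral_norm_translate_diff_sq_le[OF a, of w] t by (simp add: D_def)
  finally show ?thesis
    unfolding D_def R_def .
qed

lemma isCont_correlation:
  assumes ai: "integrable lborel a" and a: "L2 a" and b: "L2 b"
  shows "isCont (correlation a b) 0"
  unfolding isCont_def
proof (rule tendstoI)
  fix e :: real
  assume e: "e > 0"
  define A where "A = (\<integral>y. (norm (a y))\<^sup>2 \<partial>lborel)"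
  have "A \<ge> 0"
    unfolding A_def by simp
  define t where "t = e / (6 * A + 6)"
  have t: "t > 0" "2 * t * A < e / 3"
    using e \<open>A \<ge> 0\<close> by (auto simp: t_def field_simps)
  obtain n :: nat where n: "(\<integral>y. (if norm (b y) \<le> n then 0 else (norm (b y))\<^sup>2) \<partial>lborel) / (2 * t) < e / 3"
    using order_tendstoD(2)[OF tendsto_L2_tail[OF b], of "2 * t * (e / 3)"] t e
    by (auto simp: eventually_sequentially field_simps)
  have "((\<lambda>w. real n * (\<integral>y. norm (a (y + w) - a y) \<partial>lborel)) \<longlongrightarrow> real n * 0) (at 0)"
    by (intro tendsto_mult tendsto_const tendsto_L1_translate[OF ai])
  then have "\<forall>\<^sub>F w in at 0. real n * (\<integral>y. norm (a (y + w) - a y) \<partial>lborel) < e / 3"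
    using e by (intro order_tendstoD(2)) auto
  then show "\<forall>\<^sub>F w in at 0. dist (correlation a b w) (correlation a b 0) < e"
  proof eventually_elim
    case (elim w)
    with norm_correlation_diff_le[OF ai a b t(1), of w n] t(2) n
    show ?case
      unfolding A_def dist_norm by linarith
  qed
qed

section \<open>Parseval's identity and uniqueness of \<open>L\<^sup>2\<close> Fourier transforms\<close>

lemma tendsto_integral_ft_mult_cnj_damped:
  assumes ai: "integrable lborel a" and a: "L2 a" and bi: "integrable lborel b" and b: "L2 b"
  shows "(\<lambda>n. \<integral>k. ft a k * cnj (ft b k) * of_real (exp (- (1 / (real n + 1)) * (norm k)\<^sup>2)) \<partial>lborel)
     \<longlonglongrightarrow> (\<integral>x. a x * cnj (b x) \<partial>lborel)"
proof -
  have [measurable]: "a \<in> borel_measurable borel" "b \<in> borel_measurable borel"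
    using a b by (simp_all add: L2_def)
  have "(\<lambda>n. 2 * sqrt (1 / (real n + 1))) \<longlonglongrightarrow> 2 * sqrt 0"
    using LIMSEQ_inverse_real_of_nat
    by (intro tendsto_intros) (simp add: inverse_eq_divide add.commute)
  then have "(\<lambda>n. \<integral>v. of_real (exp (- (norm v)\<^sup>2) / pi) * correlation a b ((2 * sqrt (1 / (real n + 1))) *\<^sub>R v) \<partial>lborel)
      \<longlonglongrightarrow> correlation a b 0"
    by (intro tendsto_integral_gaussian_dilate[OF _ norm_correlation_le[OF a b] isCont_correlation[OF ai a b]])
       (simp_all add: borel_measurable_correlation)
  moreover have "(\<integral>k. ft a k * cnj (ft b k) * of_real (exp (- (1 / (real n + 1)) * (norm k)\<^sup>2)) \<partial>lborel) =
      (\<integral>v. of_real (exp (- (norm v)\<^sup>2) / pi) * correlation a b ((2 * sqrt (1 / (real n + 1))) *\<^sub>R v) \<partial>lborel)" for n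
    by (rule integral_ft_mult_cnj_gaussian[OF ai bi]) simp
  ultimately show ?thesis
    by (simp add: correlation_def)
qed

lemma tendsto_exp_damping: "(\<lambda>n. exp (- (1 / (real n + 1)) * x)) \<longlonglongrightarrow> 1"
proof -
  have "(\<lambda>n. exp (- (1 / (real n + 1)) * x)) \<longlonglongrightarrow> exp (- 0 * x)"
    using LIMSEQ_inverse_real_of_nat by (intro tendsto_intros) (simp add: inverse_eq_divide add.commute)
  then show ?thesis
    by simp
qed

lemma L2_ft:
  assumes ai: "integrable lborel a" and a: "L2 a"
  shows "L2 (ft a)"
proof -
  have [measurable]: "a \<in> borel_measurable borel"
    using a by (simp add: L2_def)
  define E where "E n k = exp (- (1 / (real n + 1)) * (norm k)\<^sup>2)" for n :: nat and k :: "real \<times> real"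
  define f where "f n k = (norm (ft a k))\<^sup>2 * E n k" for n k
  have f_int: "integrable lborel (f n)" for n
  proof (rule Bochner_Integration.integrable_bound[where f = "\<lambda>k. ((\<integral>x. norm (a x) \<partial>lborel) / (2 * pi))\<^sup>2 * E n k"])
    show "integrable lborel (\<lambda>k. ((\<integral>x. norm (a x) \<partial>lborel) / (2 * pi))\<^sup>2 * E n k)"
      unfolding E_def using integrable_gaussian[of "1 / (real n + 1)"] by simp
    show "f n \<in> borel_measurable lborel"
      unfolding f_def E_def by measurable
    show "AE k in lborel. norm (f n k) \<le> norm (((\<integral>x. norm (a x) \<partial>lborel) / (2 * pi))\<^sup>2 * E n k)"
      using norm_ft_le[OF ai] by (intro AE_I2) (simp add: f_def E_def power_mono)
  qed
  have "ft a k * cnj (ft a k) * of_real (E n k) = of_real (f n k)" for n k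
    unfolding f_def of_real_mult complex_norm_square ..
  moreover have "a x * cnj (a x) = of_real ((norm (a x))\<^sup>2)" for x
    unfolding complex_norm_square ..
  ultimately have "(\<lambda>n. of_real (integral\<^sup>L lborel (f n))) \<longlonglongrightarrow> (of_real (\<integral>x. (norm (a x))\<^sup>2 \<partial>lborel) :: complex)"
    using tendsto_integral_ft_mult_cnj_damped[OF ai a ai a]
    unfolding E_def[symmetric] by (simp only: integral_complex_of_real)
  then have lim: "(\<lambda>n. integral\<^sup>L lborel (f n)) \<longlonglongrightarrow> (\<integral>x. (norm (a x))\<^sup>2 \<partial>lborel)"
    by (simp only: tendsto_of_real_iff)
  have mono: "AE k in lborel. mono (\<lambda>n. f n k)"
    unfolding f_def E_def by (intro AE_I2 monoI mult_left_mono) (auto intro!: mult_right_mono frac_le)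
  have pointwise: "AE k in lborel. (\<lambda>n. f n k) \<longlonglongrightarrow> (norm (ft a k))\<^sup>2"
    using tendsto_mult_left[OF tendsto_exp_damping, of "(norm (ft a _))\<^sup>2"]
    unfolding f_def E_def by (intro AE_I2) simp
  have "(\<lambda>k. (norm (ft a k))\<^sup>2) \<in> borel_measurable lborel"
    by measurable
  with integrable_monotone_convergence[OF f_int mono pointwise lim] show ?thesis
    by (simp add: L2_def)
qed

lemma integral_ft_mult_cnj:
  assumes ai: "integrable lborel a" and a: "L2 a" and bi: "integrable lborel b" and b: "L2 b"
  shows "(\<integral>k. ft a k * cnj (ft b k) \<partial>lborel) = (\<integral>x. a x * cnj (b x) \<partial>lborel)"
proof (rule LIMSEQ_unique[OF _ tendsto_integral_ft_mult_cnj_damped[OF ai a bi b]])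
  have int: "integrable lborel (\<lambda>k. ft a k * cnj (ft b k))"
    by (rule L2_integrable_mult[OF L2_ft[OF ai a] L2_cnj[OF L2_ft[OF bi b]]])
  show "(\<lambda>n. \<integral>k. ft a k * cnj (ft b k) * of_real (exp (- (1 / (real n + 1)) * (norm k)\<^sup>2)) \<partial>lborel)
      \<longlonglongrightarrow> (\<integral>k. ft a k * cnj (ft b k) \<partial>lborel)"
  proof (rule Bochner_Integration.integral_dominated_convergence[where w = "\<lambda>k. norm (ft a k * cnj (ft b k))"])
    show "AE k in lborel. (\<lambda>n. ft a k * cnj (ft b k) * of_real (exp (- (1 / (real n + 1)) * (norm k)\<^sup>2)))
        \<longlonglongrightarrow> ft a k * cnj (ft b k)"
      using tendsto_mult_left[OF tendsto_of_real[OF tendsto_exp_damping], of "ft a _ * cnj (ft b _)"]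
      by (intro AE_I2) simp
    show "AE k in lborel. norm (ft a k * cnj (ft b k) * of_real (exp (- (1 / (real n + 1)) * (norm k)\<^sup>2)))
        \<le> norm (ft a k * cnj (ft b k))" for n
      by (intro AE_I2) (simp add: norm_mult mult_left_le)
  qed (use int in auto)
qed

lemma is_fourier_L2_ft_reflect:
  assumes \<Phi>i: "integrable lborel \<Phi>" and \<Phi>: "L2 \<Phi>"
  shows "is_fourier_L2 (ft (\<lambda>k. \<Phi> (- k))) \<Phi>"
  unfolding is_fourier_L2_def
proof (intro conjI allI impI)
  have ai: "integrable lborel (\<lambda>k. \<Phi> (- k))" and a: "L2 (\<lambda>k. \<Phi> (- k))"
    using \<Phi>i L2_reflect[OF \<Phi>] by (simp_all add: integrable_lborel_reflect_iff[where f = \<Phi>])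
  show "L2 (ft (\<lambda>k. \<Phi> (- k)))" "L2 \<Phi>"
    by (fact L2_ft[OF ai a]) (fact \<Phi>)
  fix \<psi> :: "real \<times> real \<Rightarrow> complex"
  assume "integrable lborel \<psi> \<and> L2 \<psi>"
  then have bi: "integrable lborel (\<lambda>k. cnj (\<psi> (- k)))" and b: "L2 (\<lambda>k. cnj (\<psi> (- k)))"
    using L2_cnj[OF L2_reflect] by (auto simp: integrable_lborel_reflect_iff[where f = \<psi>])
  have "(\<integral>x. ft (\<lambda>k. \<Phi> (- k)) x * ft \<psi> x \<partial>lborel) = (\<integral>k. \<Phi> (- k) * \<psi> (- k) \<partial>lborel)"
    using integral_ft_mult_cnj[OF ai a bi b] by (simp add: ft_cnj_reflect)
  also have "\<dots> = (\<integral>k. \<Phi> k * \<psi> k \<partial>lborel)"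
    by (rule integral_lborel_reflect[where f = "\<lambda>k. \<Phi> k * \<psi> k"])
  finally show "(\<integral>k. \<Phi> k * \<psi> k \<partial>lborel) = (\<integral>x. ft (\<lambda>k. \<Phi> (- k)) x * ft \<psi> x \<partial>lborel)"
    by simp
qed

lemma L2_ae_zero_if_orthogonal:
  assumes d: "L2 d" and orth: "\<And>\<psi>. integrable lborel \<psi> \<Longrightarrow> L2 \<psi> \<Longrightarrow> (\<integral>k. d k * \<psi> k \<partial>lborel) = 0"
  shows "AE k in lborel. d k = 0"
proof -
  have [measurable]: "d \<in> borel_measurable borel"
    using d by (simp add: L2_def)
  have on_balls: "AE k in lborel. k \<in> ball 0 (real n) \<longrightarrow> d k = 0" for n :: nat
  proof -
    define \<psi> where "\<psi> k = indicator (ball 0 (real n)) k * cnj (d k)" for k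
    have "integrable lborel \<psi>"
      unfolding \<psi>_def using L2_integrable_mult[OF L2_indicator_ball L2_cnj[OF d]] .
    moreover have "L2 \<psi>"
      unfolding \<psi>_def by (rule L2_mult_bounded[OF L2_cnj[OF d], where C = 1]) (auto simp: indicator_def)
    ultimately have "(\<integral>k. d k * \<psi> k \<partial>lborel) = 0"
      by (rule orth)
    moreover have "d k * \<psi> k = of_real (indicator (ball 0 (real n)) k * (norm (d k))\<^sup>2)" for k
      by (simp add: \<psi>_def complex_norm_square indicator_def flip: of_real_power)
    ultimately have "(\<integral>k. indicator (ball 0 (real n)) k * (norm (d k))\<^sup>2 \<partial>lborel) = 0"
      by (simp del: of_real_mult)
    moreover have "integrable lborel (\<lambda>k. indicator (ball 0 (real n)) k * (norm (d k))\<^sup>2)"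
      using integrable_mult_indicator[of "ball 0 (real n)" lborel "\<lambda>k. (norm (d k))\<^sup>2"] d
      by (simp add: L2_def)
    ultimately have "AE k in lborel. indicator (ball 0 (real n)) k * (norm (d k))\<^sup>2 = (0 :: real)"
      by (subst (asm) integral_nonneg_eq_0_iff_AE) auto
    then show ?thesis
      by eventually_elim (simp add: indicator_def)
  qed
  have "AE k in lborel. \<forall>n::nat. k \<in> ball 0 (real n) \<longrightarrow> d k = 0"
    unfolding AE_all_countable using on_balls by blast
  then show ?thesis
  proof eventually_elim
    case (elim k)
    obtain n :: nat where "norm k < n"
      using reals_Archimedean2 by blast
    with elim show ?case
      by auto
  qed
qed

lemma is_fourier_L2_unique:
  assumes "is_fourier_L2 u \<phi>\<^sub>1" and "is_fourier_L2 u \<phi>\<^sub>2"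
  shows "AE k in lborel. \<phi>\<^sub>1 k = \<phi>\<^sub>2 k"
proof -
  have "AE k in lborel. \<phi>\<^sub>1 k - \<phi>\<^sub>2 k = 0"
  proof (rule L2_ae_zero_if_orthogonal)
    show "L2 (\<lambda>k. \<phi>\<^sub>1 k - \<phi>\<^sub>2 k)"
      using assms by (intro L2_diff) (simp_all add: is_fourier_L2_def)
    fix \<psi> :: "real \<times> real \<Rightarrow> complex"
    assume \<psi>: "integrable lborel \<psi>" "L2 \<psi>"
    then have "integrable lborel (\<lambda>k. \<phi>\<^sub>1 k * \<psi> k)" "integrable lborel (\<lambda>k. \<phi>\<^sub>2 k * \<psi> k)"
      using assms by (auto intro: L2_integrable_mult simp: is_fourier_L2_def)
    with assms \<psi> show "(\<integral>k. (\<phi>\<^sub>1 k - \<phi>\<^sub>2 k) * \<psi> k \<partial>lborel) = 0"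
      by (simp add: is_fourier_L2_def left_diff_distrib)
  qed
  then show ?thesis
    by simp
qed

lemma is_fourier_L2_fourier_L2:
  assumes "is_fourier_L2 f \<phi>"
  shows "is_fourier_L2 f (fourier_L2 f)" and "AE k in lborel. fourier_L2 f k = \<phi> k"
proof -
  show *: "is_fourier_L2 f (fourier_L2 f)"
    unfolding fourier_L2_def by (rule someI[of "is_fourier_L2 f" \<phi>, OF assms])
  show "AE k in lborel. fourier_L2 f k = \<phi> k"
    by (rule is_fourier_L2_unique[OF * assms])
qed

lemma norm_powr_weight_sq:
  fixes z :: complex
  shows "(norm (of_real ((1 + (norm k)\<^sup>2) powr (s / 2)) * z))\<^sup>2 = (1 + (norm k)\<^sup>2) powr s * (norm z)\<^sup>2"
proof -
  have "((1 + (norm k)\<^sup>2) powr (s / 2))\<^sup>2 = (1 + (norm k)\<^sup>2) powr s"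
    by (simp add: power2_eq_square powr_add[symmetric])
  then show ?thesis
    by (simp add: norm_mult power_mult_distrib)
qed

lemma sobolev_spaceI:
  assumes "is_fourier_L2 u \<Phi>" and "integrable lborel (\<lambda>k. (1 + (norm k)\<^sup>2) powr s * (norm (\<Phi> k))\<^sup>2)"
  shows "u \<in> sobolev_space s"
proof -
  have [measurable]: "\<Phi> \<in> borel_measurable borel"
    using assms(1) by (simp add: is_fourier_L2_def L2_def)
  have "L2 (\<lambda>k. of_real ((1 + (norm k)\<^sup>2) powr (s / 2)) * \<Phi> k)"
    using assms(2) unfolding L2_def norm_powr_weight_sq by simp
  with assms(1) show ?thesis
    unfolding sobolev_space_def is_fourier_L2_def by blast
qed

lemma sobolev_spaceD:
  assumes "f \<in> sobolev_space s"
  shows "is_fourier_L2 f (fourier_L2 f)"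
    and "integrable lborel (\<lambda>k. (1 + (norm k)\<^sup>2) powr s * (norm (fourier_L2 f k))\<^sup>2)"
proof -
  obtain \<phi> where \<phi>: "is_fourier_L2 f \<phi>" and weighted: "L2 (\<lambda>k. of_real ((1 + (norm k)\<^sup>2) powr (s / 2)) * \<phi> k)"
    using assms unfolding sobolev_space_def by blast
  show F: "is_fourier_L2 f (fourier_L2 f)"
    by (rule is_fourier_L2_fourier_L2(1)[OF \<phi>])
  have [measurable]: "fourier_L2 f \<in> borel_measurable borel"
    using F by (simp add: is_fourier_L2_def L2_def)
  have "integrable lborel (\<lambda>k. (1 + (norm k)\<^sup>2) powr s * (norm (\<phi> k))\<^sup>2)"
    using weighted unfolding L2_def norm_powr_weight_sq by simp
  then show "integrable lborel (\<lambda>k. (1 + (norm k)\<^sup>2) powr s * (norm (fourier_L2 f k))\<^sup>2)"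
    by (rule integrable_cong_AE_imp) (use is_fourier_L2_fourier_L2(2)[OF \<phi>] in auto)
qed

lemma sobolev_norm_eq:
  assumes "is_fourier_L2 u \<Phi>"
  shows "sobolev_norm s u = sqrt (\<integral>k. (1 + (norm k)\<^sup>2) powr s * (norm (\<Phi> k))\<^sup>2 \<partial>lborel)"
proof -
  have "AE k in lborel. (1 + (norm k)\<^sup>2) powr s * (norm (fourier_L2 u k))\<^sup>2 = (1 + (norm k)\<^sup>2) powr s * (norm (\<Phi> k))\<^sup>2"
    using is_fourier_L2_fourier_L2(2)[OF assms] by eventually_elim simp
  then have "(\<integral>k. (1 + (norm k)\<^sup>2) powr s * (norm (fourier_L2 u k))\<^sup>2 \<partial>lborel) =
      (\<integral>k. (1 + (norm k)\<^sup>2) powr s * (norm (\<Phi> k))\<^sup>2 \<partial>lborel)"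
    using assms is_fourier_L2_fourier_L2(1)[OF assms] unfolding is_fourier_L2_def L2_def
    by (intro integral_cong_AE) auto
  then show ?thesis
    unfolding sobolev_norm_def by simp
qed

lemma sobolev_space_multiplier:
  fixes m :: "real \<times> real \<Rightarrow> real"
  assumes [measurable]: "m \<in> borel_measurable borel"
    and m: "\<And>k. \<bar>m k\<bar> * (1 + (norm k)\<^sup>2) \<le> C"
    and f: "f \<in> sobolev_space s"
  shows "\<exists>u \<in> sobolev_space (s + 2). is_fourier_L2 u (\<lambda>k. of_real (m k) * fourier_L2 f k) \<and>
           sobolev_norm (s + 2) u \<le> C * sobolev_norm s f"
proof -
  have m_le: "\<bar>m k\<bar> \<le> C" for k
    using m[of k] mult_left_mono[of 1 "1 + (norm k)\<^sup>2" "\<bar>m k\<bar>"] by simp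
  then have "C \<ge> 0"
    by (meson abs_ge_zero order_trans)
  define \<phi> where "\<phi> = fourier_L2 f"
  have F: "is_fourier_L2 f \<phi>" and weighted: "integrable lborel (\<lambda>k. (1 + (norm k)\<^sup>2) powr s * (norm (\<phi> k))\<^sup>2)"
    using sobolev_spaceD[OF f] by (simp_all add: \<phi>_def)
  have \<phi>: "L2 \<phi>"
    using F by (simp add: is_fourier_L2_def)
  define \<Phi> where "\<Phi> k = of_real (m k) * \<phi> k" for k
  have Fu: "is_fourier_L2 (ft (\<lambda>k. \<Phi> (- k))) \<Phi>"
  proof (rule is_fourier_L2_ft_reflect)
    show "integrable lborel \<Phi>"
      unfolding \<Phi>_def using L2_of_real_decay[OF _ m] \<phi> by (rule L2_integrable_mult) simp
    show "L2 \<Phi>"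
      unfolding \<Phi>_def using \<phi> m_le by (intro L2_mult_bounded[where C = C]) auto
  qed
  have bound: "(1 + (norm k)\<^sup>2) powr (s + 2) * (norm (\<Phi> k))\<^sup>2 \<le>
      C\<^sup>2 * ((1 + (norm k)\<^sup>2) powr s * (norm (\<phi> k))\<^sup>2)" for k
  proof -
    have "(\<bar>m k\<bar> * (1 + (norm k)\<^sup>2))\<^sup>2 \<le> C\<^sup>2"
      using m[of k] by (intro power_mono) auto
    then have "(\<bar>m k\<bar> * (1 + (norm k)\<^sup>2))\<^sup>2 * ((1 + (norm k)\<^sup>2) powr s * (norm (\<phi> k))\<^sup>2) \<le>
        C\<^sup>2 * ((1 + (norm k)\<^sup>2) powr s * (norm (\<phi> k))\<^sup>2)"
      by (rule mult_right_mono) simp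
    moreover have "(1 + (norm k)\<^sup>2) powr (s + 2) = (1 + (norm k)\<^sup>2) powr s * (1 + (norm k)\<^sup>2)\<^sup>2"
      by (simp add: powr_add add_pos_nonneg)
    ultimately show ?thesis
      by (simp add: \<Phi>_def norm_mult power_mult_distrib mult_ac)
  qed
  have weighted_u: "integrable lborel (\<lambda>k. (1 + (norm k)\<^sup>2) powr (s + 2) * (norm (\<Phi> k))\<^sup>2)"
  proof (rule Bochner_Integration.integrable_bound[where f = "\<lambda>k. C\<^sup>2 * ((1 + (norm k)\<^sup>2) powr s * (norm (\<phi> k))\<^sup>2)"])
    show "integrable lborel (\<lambda>k. C\<^sup>2 * ((1 + (norm k)\<^sup>2) powr s * (norm (\<phi> k))\<^sup>2))"
      using weighted by simp
    show "AE k in lborel. norm ((1 + (norm k)\<^sup>2) powr (s + 2) * (norm (\<Phi> k))\<^sup>2) \<le>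
        norm (C\<^sup>2 * ((1 + (norm k)\<^sup>2) powr s * (norm (\<phi> k))\<^sup>2))"
      using bound by (intro AE_I2) simp
    have [measurable]: "\<phi> \<in> borel_measurable borel"
      using \<phi> by (simp add: L2_def)
    show "(\<lambda>k. (1 + (norm k)\<^sup>2) powr (s + 2) * (norm (\<Phi> k))\<^sup>2) \<in> borel_measurable lborel"
      unfolding \<Phi>_def by measurable
  qed
  have "sobolev_norm (s + 2) (ft (\<lambda>k. \<Phi> (- k))) \<le>
      sqrt (C\<^sup>2 * (\<integral>k. (1 + (norm k)\<^sup>2) powr s * (norm (\<phi> k))\<^sup>2 \<partial>lborel))"
    unfolding sobolev_norm_eq[OF Fu] integral_mult_right_zero[symmetric]
    using weighted weighted_u bound by (intro real_sqrt_le_mono integral_mono) auto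
  also have "\<dots> = C * sobolev_norm s f"
    using \<open>C \<ge> 0\<close> by (simp add: sobolev_norm_eq[OF F] real_sqrt_mult)
  finally show ?thesis
    using sobolev_spaceI[OF Fu weighted_u] Fu by (auto simp: \<Phi>_def[abs_def] \<phi>_def)
qed

section \<open>The symbol\<close>

lemma abs_fst_le_norm: "\<bar>fst k\<bar> \<le> norm k" for k :: "real \<times> real"
  by (rule power2_le_imp_le) (use norm_pair_sq[of k] in auto)

text \<open>At \<open>k = 0\<close> the junk value \<open>x / 0 = 0\<close> makes \<open>gsym 0 = 1\<close>, the continuous extension, so
  no case split on \<open>k\<close> is needed.\<close>

lemma gsym_ge: "1 + (norm k)\<^sup>2 - 2 * \<bar>fst k\<bar> \<le> gsym k"
proof -
  have "(fst k)\<^sup>2 = \<bar>fst k\<bar> * \<bar>fst k\<bar>"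
    by (simp add: power2_eq_square)
  also have "\<dots> \<le> \<bar>fst k\<bar> * norm k"
    by (rule mult_left_mono[OF abs_fst_le_norm]) simp
  finally have "2 * (fst k)\<^sup>2 / norm k \<le> 2 * \<bar>fst k\<bar>"
    by (cases "norm k = 0") (simp_all add: pos_divide_le_eq)
  then show ?thesis
    unfolding gsym_def by linarith
qed

lemma sq_le_of_notin_balls:
  fixes k :: "real \<times> real"
  assumes "0 \<le> \<delta>" and "k \<notin> ball (1, 0) \<delta> \<union> ball (-1, 0) \<delta>"
  shows "\<delta>\<^sup>2 \<le> 1 + (norm k)\<^sup>2 - 2 * \<bar>fst k\<bar>"
proof -
  obtain x z where k: "k = (x, z)"
    by (cases k)
  have "\<delta>\<^sup>2 \<le> (c - x)\<^sup>2 + z\<^sup>2" if "k \<notin> ball (c, 0) \<delta>" for c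
  proof -
    have "\<delta> \<le> sqrt ((c - x)\<^sup>2 + z\<^sup>2)"
      using that by (simp add: k dist_Pair_Pair dist_real_def not_less)
    then have "\<delta>\<^sup>2 \<le> (sqrt ((c - x)\<^sup>2 + z\<^sup>2))\<^sup>2"
      using assms(1) by (intro power_mono) auto
    then show ?thesis
      by simp
  qed
  from this[of "if x \<ge> 0 then 1 else -1"] assms(2)
  have "\<delta>\<^sup>2 \<le> ((if x \<ge> 0 then 1 else -1) - x)\<^sup>2 + z\<^sup>2"
    by (cases "x \<ge> 0") auto
  also have "\<dots> = 1 + (norm k)\<^sup>2 - 2 * \<bar>fst k\<bar>"
    using norm_pair_sq[of k] by (cases "x \<ge> 0") (auto simp: k power2_eq_square algebra_simps)
  finally show ?thesis .
qed

lemma one_plus_norm_sq_le: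
  fixes k :: "real \<times> real"
  assumes "2 \<le> norm k"
  shows "(1 + (norm k)\<^sup>2) / 5 \<le> 1 + (norm k)\<^sup>2 - 2 * \<bar>fst k\<bar>"
proof -
  have "0 \<le> (2 * norm k - 1) * (norm k - 2)"
    using assms by simp
  also have "\<dots> = 2 * (norm k)\<^sup>2 - 5 * norm k + 2"
    by (simp add: algebra_simps power2_eq_square)
  finally have "1 + (norm k)\<^sup>2 \<le> (1 + (norm k)\<^sup>2 - 2 * \<bar>fst k\<bar>) * 5"
    using abs_fst_le_norm[of k] by (simp add: algebra_simps)
  then show ?thesis
    by (simp add: pos_divide_le_eq)
qed

lemma gsym_lower_bound:
  assumes "0 < \<delta>" "\<delta> \<le> 1" and k: "k \<notin> ball (1, 0) \<delta> \<union> ball (-1, 0) \<delta>"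
  shows "\<delta>\<^sup>2 / 5 * (1 + (norm k)\<^sup>2) \<le> gsym k"
proof -
  have "\<delta>\<^sup>2 / 5 * (1 + (norm k)\<^sup>2) \<le> 1 + (norm k)\<^sup>2 - 2 * \<bar>fst k\<bar>"
  proof (cases "2 \<le> norm k")
    case True
    have "\<delta>\<^sup>2 \<le> 1"
      using assms by (simp add: power_le_one)
    then have "\<delta>\<^sup>2 * (1 + (norm k)\<^sup>2) \<le> 1 + (norm k)\<^sup>2"
      by (intro mult_left_le_one_le) auto
    then have "\<delta>\<^sup>2 / 5 * (1 + (norm k)\<^sup>2) \<le> (1 + (norm k)\<^sup>2) / 5"
      by simp
    with one_plus_norm_sq_le[OF True] show ?thesis
      by linarith
  next
    case False
    then have "1 + (norm k)\<^sup>2 \<le> 5"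
      using power_mono[of "norm k" 2 2] by simp
    then have "\<delta>\<^sup>2 * (1 + (norm k)\<^sup>2) \<le> \<delta>\<^sup>2 * 5"
      by (intro mult_left_mono) auto
    then have "\<delta>\<^sup>2 / 5 * (1 + (norm k)\<^sup>2) \<le> \<delta>\<^sup>2"
      by simp
    with sq_le_of_notin_balls[OF _ k] assms(1) show ?thesis
      by linarith
  qed
  with gsym_ge[of k] show ?thesis
    by linarith
qed

lemma abs_multiplier_le:
  assumes "0 < \<delta>" "\<delta> \<le> 1"
  shows "\<bar>multiplier \<delta> k\<bar> * (1 + (norm k)\<^sup>2) \<le> 5 / \<delta>\<^sup>2"
proof (cases "k \<in> ball (1, 0) \<delta> \<union> ball (-1, 0) \<delta>")
  case True
  then show ?thesis
    by (simp add: multiplier_def chi_def)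
next
  case False
  have pos: "0 < \<delta>\<^sup>2 / 5 * (1 + (norm k)\<^sup>2)"
    using assms by (simp add: add_pos_nonneg)
  have "\<bar>multiplier \<delta> k\<bar> * (1 + (norm k)\<^sup>2) = (1 + (norm k)\<^sup>2) / gsym k"
    using False gsym_lower_bound[OF assms False] pos by (simp add: multiplier_def chi_def)
  also have "\<dots> \<le> (1 + (norm k)\<^sup>2) / (\<delta>\<^sup>2 / 5 * (1 + (norm k)\<^sup>2))"
    using gsym_lower_bound[OF assms False] pos by (intro divide_left_mono) (auto simp: add_pos_nonneg)
  also have "\<dots> = 1 / (\<delta>\<^sup>2 / 5)"
    using pos by (intro nonzero_divide_mult_cancel_right) auto
  also have "\<dots> = 5 / \<delta>\<^sup>2"
    by simp
  finally show ?thesis .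
qed

lemma borel_measurable_multiplier [measurable]: "multiplier \<delta> \<in> borel_measurable borel"
proof -
  have [measurable]: "ball (1 :: real, 0 :: real) \<delta> \<in> sets borel" "ball (-1 :: real, 0 :: real) \<delta> \<in> sets borel"
    by auto
  have [measurable]: "(\<lambda>k :: real \<times> real. fst k) \<in> borel_measurable borel"
    by (intro borel_measurable_continuous_onI continuous_intros)
  show ?thesis
    unfolding multiplier_def[abs_def] chi_def gsym_def by measurable
qed

theorem proposition3p1:
  fixes \<delta> :: real
  assumes "0 < \<delta>" and "\<delta> < 1/5"
  shows "\<exists>C. \<forall>f \<in> sobolev_space 1. \<exists>u \<in> sobolev_space 3.
           is_fourier_L2 u (\<lambda>k. complex_of_real (multiplier \<delta> k) * fourier_L2 f k) \<and>
           sobolev_norm 3 u \<le> C * sobolev_norm 1 f"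
proof (intro exI ballI)
  fix f
  assume f: "f \<in> sobolev_space 1"
  have "\<delta> \<le> 1" and three: "(1 :: real) + 2 = 3"
    using assms(2) by simp_all
  from sobolev_space_multiplier[OF borel_measurable_multiplier abs_multiplier_le[OF assms(1) this(1)] f]
  show "\<exists>u \<in> sobolev_space 3. is_fourier_L2 u (\<lambda>k. complex_of_real (multiplier \<delta> k) * fourier_L2 f k) \<and>
      sobolev_norm 3 u \<le> 5 / \<delta>\<^sup>2 * sobolev_norm 1 f"
    unfolding three .
qed

end
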